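(* For every $\phi \in L^1(\mathbb{R}_+)$, $f \in L^{\infty}(\mathbb{R}_+)$ and $\omega \in \Omega^*$, \[(U_{\phi}f)_{\omega}(x) = (f_{\omega} * \tilde{\phi})(x) \quad \text{for every } x \in \mathbb{R},\] where $\tilde{\phi} \in L^1(\mathbb{R})$ equals $\phi$ on $[0,\infty)$ and $0$ on $(-\infty,0)$.
   Context: $\mathbb{R}_+ = [0,\infty)$; functions are complex-valued. $(U_\phi f)(x) = \int_0^x f(t)\phi(x-t)\,dt$ for $x \ge 0$; $U_\phi f \in L^\infty(\mathbb{R}_+)$. Convolution on $\mathbb{R}$: $(g*h)(x) = \int_{-\infty}^\infty g(x-t)h(t)\,dt$. Let $\beta\mathbb{N}$ be the Stone–Čech compactification of $\mathbb{N}$ (the ultrafilters on $\mathbb{N}$), $\mathbb{N}^* = \beta\mathbb{N}\setminus\mathbb{N}$, and $\tau:\beta\mathbb{N}\to\beta\mathbb{N}$ the continuous extension of $n\mapsto n+1$ (a homeomorphism of $\mathbb{N}^*$). Let $\Omega$ be the quotient of $\beta\mathbb{N}\times[0,1]$ identifying $(\eta,1)$ with $(\tau\eta,0)$ for all $\eta$, and $\Omega^*\subseteq\Omega$ the closed set of classes $(\eta,u)$ with $\eta\in\mathbb{N}^*$. For $s\in\mathbb{R}$, $\tau^s:\Omega^*\to\Omega^*$ is $\tau^s(\eta,u) = (\tau^{[u+s]}\eta,\ u+s-[u+s])$, $[\cdot]$ the integer part. Each $\omega = (\eta,u)$ is identified with the ultrafilter on $\mathbb{R}_+$ generated by $\{u+A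 : A\in\eta\}$, and $\omega\text{-}\lim$ denotes the limit along it. For $g \in L^\infty(\mathbb{R}_+)$ and $\omega\in\Omega^*$, $g_\omega := \omega\text{-}\lim_s g(\cdot+s)$, the limit taken in the weak* topology of $L^\infty(\mathbb{R}_+)$; $g_\omega$ is extended to an element of $L^\infty(\mathbb{R})$ by $g_\omega(x) = g_{\tau^{-N}\omega}(N+x)$ for $x\in[-N,0]$, $N>0$. *)

theory Defs
  imports "HOL-Analysis.Analysis"
begin

definition Linf_Rplus :: "(real \<Rightarrow> complex) \<Rightarrow> bool" where
  "Linf_Rplus g \<longleftrightarrow> set_borel_measurable lborel {0..} g \<and>
     (\<exists>B. AE t in lborel. t \<in> {0..} \<longrightarrow> norm (g t) \<le> B)"

definition L1_Rplus :: "(real \<Rightarrow> complex) \<Rightarrow> bool" where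
  "L1_Rplus \<phi> \<longleftrightarrow> set_integrable lborel {0..} \<phi>"

definition Uop :: "(real \<Rightarrow> complex) \<Rightarrow> (real \<Rightarrow> complex) \<Rightarrow> real \<Rightarrow> complex" where
  "Uop \<phi> f x = (LINT t:{0..x}|lborel. f t * \<phi> (x - t))"

definition conv :: "(real \<Rightarrow> complex) \<Rightarrow> (real \<Rightarrow> complex) \<Rightarrow> real \<Rightarrow> complex" where
  "conv g h x = (LINT t|lborel. g (x - t) * h t)"

definition phi_tilde :: "(real \<Rightarrow> complex) \<Rightarrow> real \<Rightarrow> complex" where
  "phi_tilde \<phi> t = (if 0 \<le> t then \<phi> t else 0)"

definition ultrafilter :: "'a filter \<Rightarrow> bool" where
  "ultrafilter F \<longleftrightarrow> F \<noteq> bot \<and> (\<forall>P. eventually P F \<or> eventually (\<lambda>x. \<not> P x) F)"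

text \<open>Elements of N^* = beta N minus N: free (non-principal) ultrafilters on N.\<close>
definition free_ultrafilter_nat :: "nat filter \<Rightarrow> bool" where
  "free_ultrafilter_nat \<eta> \<longleftrightarrow> ultrafilter \<eta> \<and> \<eta> \<le> cofinite"

text \<open>tau^k on N^* for an integer k (continuous extension of n |-> n + k;
  on free ultrafilters the values of the map on finitely many n are irrelevant).\<close>
definition tau_pow :: "int \<Rightarrow> nat filter \<Rightarrow> nat filter" where
  "tau_pow k \<eta> = filtermap (\<lambda>n. nat (int n + k)) \<eta>"

text \<open>Points of Omega^* are represented by pairs (eta,u), eta free, u in [0,1];
  (eta,1) and (tau eta,0) represent the same point.
  tau^s(eta,u) = (tau^[u+s] eta, u+s-[u+s]).\<close>
definition tau_s :: "real \<Rightarrow> nat filter \<times> real \<Rightarrow> nat filter \<times> real" where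
  "tau_s s \<omega> = (tau_pow \<lfloor>snd \<omega> + s\<rfloor> (fst \<omega>), snd \<omega> + s - of_int \<lfloor>snd \<omega> + s\<rfloor>)"

definition omega_filter :: "nat filter \<times> real \<Rightarrow> real filter" where
  "omega_filter \<omega> = filtermap (\<lambda>n. snd \<omega> + real n) (fst \<omega>)"

definition weakstar_shift_lim :: "real filter \<Rightarrow> (real \<Rightarrow> complex) \<Rightarrow> (real \<Rightarrow> complex) \<Rightarrow> bool" where
  "weakstar_shift_lim F g h \<longleftrightarrow> Linf_Rplus h \<and>
     (\<forall>\<psi>. L1_Rplus \<psi> \<longrightarrow>
        ((\<lambda>s. LINT t:{0..}|lborel. g (t + s) * \<psi> t) \<longlongrightarrow>
           (LINT t:{0..}|lborel. h t * \<psi> t)) F)"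

text \<open>g_omega on R_+ (a representative of the L^oo class).\<close>
definition g_omega :: "(real \<Rightarrow> complex) \<Rightarrow> nat filter \<times> real \<Rightarrow> real \<Rightarrow> complex" where
  "g_omega g \<omega> = (SOME h. weakstar_shift_lim (omega_filter \<omega>) g h)"

text \<open>Extension to R: g_omega(x) = g_{tau^{-N} omega}(N + x) for x in [-N,0];
  we use N = ceiling(-x) for x < 0.\<close>
definition g_omega_ext :: "(real \<Rightarrow> complex) \<Rightarrow> nat filter \<times> real \<Rightarrow> real \<Rightarrow> complex" where
  "g_omega_ext g \<omega> x =
     (if 0 \<le> x then g_omega g \<omega> x
      else (let N = real_of_int \<lceil>- x\<rceil> in g_omega g (tau_s (- N) \<omega>) (N + x)))"

end

theory Submission
  imports Defs "HOL-Probability.Sinc_Integral"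
begin

text \<open>Along the filter of \<omega> the translates \<open>(U\<^sub>\<phi> f)(\<cdot> + s)\<close> are convolutions of
  the translates of f with \<open>\<phi>\<tilde>\<close>.  Pairing with \<open>\<psi> \<in> L\<^sup>1\<close> and applying Fubini moves
  the convolution onto the test function, so it suffices that \<open>f(\<cdot> + s)\<close> converges weak* to
  \<open>f\<^sub>\<omega>\<close> on the whole line.  On \<open>[0,\<infinity>)\<close> this is the definition; on a block
  \<open>[-N, -N + 1)\<close> it is the weak* convergence at the point \<open>\<tau>\<^sup>-\<^sup>N \<omega>\<close>, and the blocks
  far to the left contribute uniformly little because f is bounded.
  Since \<open>g\<^sub>\<omega>\<close> is defined by choice, one also needs that weak* limits of bounded translates
  exist and are unique almost everywhere: along an ultrafilter every bounded net of pairings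
  converges, and the limit functional on \<open>L\<^sup>1\<close> is represented by a bounded density
  (Radon--Nikodym with respect to the finite measure \<open>e\<^sup>-\<^sup>t dt\<close> on \<open>[0,\<infinity>)\<close>).\<close>

section \<open>Limits along ultrafilters\<close>

lemma ultrafilter_filtermap:
  assumes "ultrafilter F" shows "ultrafilter (filtermap g F)"
  using assms unfolding ultrafilter_def by (auto simp: eventually_filtermap filtermap_bot_iff)

lemma ultrafilter_bounded_tendsto_exists:
  fixes Q :: "'a \<Rightarrow> 'b::{real_normed_vector, heine_borel}"
  assumes U: "ultrafilter F" and ev: "eventually (\<lambda>s. norm (Q s) \<le> C) F"
  shows "\<exists>L. (Q \<longlongrightarrow> L) F"
proof -
  have G: "filtermap Q F \<noteq> bot" using U by (simp add: ultrafilter_def filtermap_bot_iff)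
  have "eventually (\<lambda>x. x \<in> cball 0 C) (filtermap Q F)"
    using ev by (simp add: eventually_filtermap)
  with G obtain L where L: "inf (nhds L) (filtermap Q F) \<noteq> bot"
    using compact_cball[of 0 C] unfolding compact_filter by blast
  have "(Q \<longlongrightarrow> L) F"
    unfolding tendsto_def
  proof (intro allI impI)
    fix S :: "'b set" assume S: "open S" "L \<in> S"
    show "eventually (\<lambda>s. Q s \<in> S) F"
    proof (rule ccontr)
      assume "\<not> eventually (\<lambda>s. Q s \<in> S) F"
      with U have "eventually (\<lambda>s. Q s \<notin> S) F" unfolding ultrafilter_def by blast
      then have "eventually (\<lambda>x. x \<notin> S) (filtermap Q F)" by (simp add: eventually_filtermap)
      moreover have "eventually (\<lambda>x. x \<in> S) (nhds L)" using S eventually_nhds by blast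
      ultimately have "eventually (\<lambda>x. False) (inf (nhds L) (filtermap Q F))"
        unfolding eventually_inf by blast
      with L show False by (simp add: eventually_False)
    qed
  qed
  then show ?thesis by blast
qed

lemma tendsto_of_approximations:
  fixes a :: "'a \<Rightarrow> 'b::real_normed_vector"
  assumes b: "\<And>K. (b K \<longlongrightarrow> c K) F"
    and ab: "\<And>K. eventually (\<lambda>n. norm (a n - b K n) \<le> e K) F"
    and ac: "\<And>K. norm (a0 - c K) \<le> e K"
    and e: "e \<longlonglongrightarrow> 0"
  shows "(a \<longlongrightarrow> a0) F"
proof (rule tendstoI)
  fix \<epsilon> :: real assume "\<epsilon> > 0"
  then have "\<epsilon>/3 > 0" by simp
  from e[THEN tendstoD, OF this] obtain K where K: "dist (e K) 0 < \<epsilon>/3"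
    by (auto simp: eventually_sequentially)
  from b[of K, THEN tendstoD, OF \<open>\<epsilon>/3 > 0\<close>] ab[of K]
  show "eventually (\<lambda>n. dist (a n) a0 < \<epsilon>) F"
  proof eventually_elim
    case (elim n)
    have "a n - a0 = (a n - b K n) + (b K n - c K) - (a0 - c K)" by simp
    then have "norm (a n - a0) \<le> norm (a n - b K n) + norm (b K n - c K) + norm (a0 - c K)"
      by (metis norm_triangle_ineq norm_triangle_ineq4 add_right_mono order_trans)
    moreover have "norm (a n - b K n) < \<epsilon>/3" "norm (a0 - c K) < \<epsilon>/3"
      using elim(2) ac[of K] K by (simp_all add: dist_norm)
    ultimately show ?case using elim(1) by (simp add: dist_norm)
  qed
qed

lemma AE_lborel_affine:
  fixes P :: "real \<Rightarrow> bool"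
  assumes "c \<noteq> 0" "AE x in lborel. P x"
  shows "AE x in lborel. P (t + c * x)"
proof -
  from assms(2) obtain N where N: "{x \<in> space lborel. \<not> P x} \<subseteq> N" "N \<in> null_sets lborel"
    by (auto elim!: AE_E simp: null_sets_def)
  have "AE x in lborel. x \<notin> N" using N(2) by (rule AE_not_in)
  then have "AE x in lborel. t + c * x \<notin> N"
    using N(2) assms(1) by (intro AE_borel_affine) auto
  then show ?thesis by (rule AE_mp) (intro AE_I2, use N(1) in auto)
qed

lemma AE_lborel_translate:
  fixes P :: "real \<Rightarrow> bool"
  assumes "AE x in lborel. P x"
  shows "AE x in lborel. P (x + t)"
  using AE_lborel_affine[OF _ assms, of 1 t] by (simp add: add.commute)

lemma lborel_integral_translate:
  fixes F :: "real \<Rightarrow> 'a::{banach, second_countable_topology}"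
  shows "(\<integral>x. F x \<partial>lborel) = (\<integral>x. F (x + c) \<partial>lborel)"
  using lborel_integral_real_affine[of 1 F c] by (simp add: add.commute)

lemma lborel_integral_reflect:
  fixes F :: "real \<Rightarrow> 'a::{banach, second_countable_topology}"
  shows "(\<integral>x. F x \<partial>lborel) = (\<integral>x. F (c - x) \<partial>lborel)"
  using lborel_integral_real_affine[of "-1" F c] by simp

lemma integrable_lborel_translate:
  fixes F :: "real \<Rightarrow> 'a::{banach, second_countable_topology}"
  shows "integrable lborel F \<Longrightarrow> integrable lborel (\<lambda>x. F (x + c))"
  using lborel_integrable_real_affine[of F 1 c] by (simp add: add.commute)

lemma integrable_lborel_reflect:
  fixes F :: "real \<Rightarrow> 'a::{banach, second_countable_topology}"
  shows "integrable lborel F \<Longrightarrow> integrable lborel (\<lambda>x. F (c - x))"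
  using lborel_integrable_real_affine[of F "-1" c] by simp

lemma integrable_bounded_mult:
  fixes p G :: "'a \<Rightarrow> 'b::{real_normed_field, banach, second_countable_topology}"
  assumes p: "integrable M p" and G: "G \<in> borel_measurable M"
    and bd: "AE t in M. norm (G t) \<le> B"
  shows "integrable M (\<lambda>t. G t * p t)"
proof (rule Bochner_Integration.integrable_bound[of _ "\<lambda>t. B *\<^sub>R p t"])
  show "integrable M (\<lambda>t. B *\<^sub>R p t)" using p by simp
  show "(\<lambda>t. G t * p t) \<in> borel_measurable M" using G p by measurable
  show "AE t in M. norm (G t * p t) \<le> norm (B *\<^sub>R p t)"
    using bd by eventually_elim (auto simp: norm_mult intro!: mult_right_mono)
qed

lemma norm_integral_bounded_mult:
  fixes p G :: "'a \<Rightarrow> 'b::{real_normed_field, banach, second_countable_topology}"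
  assumes p: "integrable M p" and G: "G \<in> borel_measurable M"
    and bd: "AE t in M. norm (G t) \<le> B" and B: "0 \<le> B"
  shows "norm (\<integral>t. G t * p t \<partial>M) \<le> B * (\<integral>t. norm (p t) \<partial>M)"
proof -
  have "norm (\<integral>t. G t * p t \<partial>M) \<le> (\<integral>t. norm (G t * p t) \<partial>M)" by (rule integral_norm_bound)
  also have "\<dots> \<le> (\<integral>t. B * norm (p t) \<partial>M)"
  proof (rule integral_mono_AE')
    show "integrable M (\<lambda>t. B * norm (p t))" using p by simp
    show "AE t in M. norm (G t * p t) \<le> B * norm (p t)"
      using bd by eventually_elim (auto simp: norm_mult intro!: mult_right_mono)
    show "AE t in M. 0 \<le> B * norm (p t)" using B by simp
  qed
  finally show ?thesis by simp
qed

section \<open>Bounded additive set functions have bounded densities\<close>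

lemma additive_UN_lessThan:
  fixes \<kappa> :: "'a set \<Rightarrow> real"
  fixes A :: "nat \<Rightarrow> 'a set"
  assumes add: "additive (sets M) \<kappa>" and e: "\<kappa> {} = 0"
    and A: "range A \<subseteq> sets M" "disjoint_family A"
  shows "\<kappa> (\<Union>i<n. A i) = (\<Sum>i<n. \<kappa> (A i))"
proof (induction n)
  case (Suc n)
  have "(\<Union>i<Suc n. A i) = (\<Union>i<n. A i) \<union> A n" by (auto simp: lessThan_Suc)
  moreover have "(\<Union>i<n. A i) \<inter> A n = {}"
    using A(2) by (auto simp: disjoint_family_on_def) (metis IntI empty_iff nat_neq_iff)
  moreover have "(\<Union>i<n. A i) \<in> sets M" "A n \<in> sets M" using A(1) by auto
  ultimately show ?case using Suc additiveD[OF add] by simp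
qed (use e in simp)

lemma (in finite_measure) sums_bounded_additive:
  fixes \<kappa> :: "'a set \<Rightarrow> real"
  assumes add: "additive (sets M) \<kappa>"
    and bnd: "\<And>A. A \<in> sets M \<Longrightarrow> \<bar>\<kappa> A\<bar> \<le> B * measure M A"
    and A: "range A \<subseteq> sets M" "disjoint_family A"
  shows "(\<lambda>i. \<kappa> (A i)) sums \<kappa> (\<Union>i. A i)"
proof -
  define U where "U = (\<Union>i. A i)"
  define A' where "A' n = (\<Union>i<n. A i)" for n
  have A'S: "A' n \<in> sets M" for n using A(1) unfolding A'_def by auto
  have US: "U \<in> sets M" using A(1) unfolding U_def by auto
  have sub: "A' n \<subseteq> U" for n unfolding A'_def U_def by auto
  have "incseq A'" unfolding A'_def incseq_def by (intro allI impI UN_mono) auto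
  moreover have "(\<Union>n. A' n) = U" unfolding A'_def U_def by auto
  ultimately have "(\<lambda>n. measure M (A' n)) \<longlonglongrightarrow> measure M U"
    using finite_Lim_measure_incseq[of A'] A'S by auto
  then have "(\<lambda>n. B * (measure M U - measure M (A' n))) \<longlonglongrightarrow> B * (measure M U - measure M U)"
    by (intro tendsto_intros)
  moreover have "norm (\<kappa> (U - A' n)) \<le> B * (measure M U - measure M (A' n))" for n
    using bnd[of "U - A' n"] A'S US finite_measure_Diff[OF US A'S sub] by simp
  ultimately have rest: "(\<lambda>n. \<kappa> (U - A' n)) \<longlonglongrightarrow> 0"
    by (intro Lim_null_comparison[of "\<lambda>n. \<kappa> (U - A' n)"] always_eventually) auto
  have "\<kappa> U = \<kappa> (A' n) + \<kappa> (U - A' n)" for n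
  proof -
    have "U = A' n \<union> (U - A' n)" using sub[of n] by auto
    then show ?thesis using additiveD[OF add, of "A' n" "U - A' n"] A'S US by auto
  qed
  moreover have "\<kappa> (A' n) = (\<Sum>i<n. \<kappa> (A i))" for n
    unfolding A'_def using bnd[of "{}"] by (intro additive_UN_lessThan[OF add _ A]) simp
  ultimately have "(\<Sum>i<n. \<kappa> (A i)) = \<kappa> U - \<kappa> (U - A' n)" for n
    by (metis add_diff_cancel_right')
  moreover have "(\<lambda>n. \<kappa> U - \<kappa> (U - A' n)) \<longlonglongrightarrow> \<kappa> U - 0" by (intro tendsto_intros rest)
  ultimately show ?thesis unfolding sums_def U_def by simp
qed

lemma (in finite_measure) AE_le_of_nn_integral_indicator_le:
  assumes \<rho>[measurable]: "\<rho> \<in> borel_measurable M" and c: "c \<noteq> \<infinity>"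
    and le: "\<And>A. A \<in> sets M \<Longrightarrow> (\<integral>\<^sup>+x. \<rho> x * indicator A x \<partial>M) \<le> c * emeasure M A"
  shows "AE x in M. \<rho> x \<le> c"
proof -
  define A where "A = {x \<in> space M. c < \<rho> x}"
  have AS[measurable]: "A \<in> sets M" unfolding A_def by measurable
  have "(\<integral>\<^sup>+x. \<rho> x * indicator A x \<partial>M) =
      (\<integral>\<^sup>+x. (\<rho> x - c) * indicator A x + c * indicator A x \<partial>M)"
    by (intro nn_integral_cong) (auto simp: A_def diff_add_cancel_ennreal indicator_def less_imp_le)
  also have "\<dots> = (\<integral>\<^sup>+x. (\<rho> x - c) * indicator A x \<partial>M) + c * emeasure M A"
    by (subst nn_integral_add) (auto simp: nn_integral_cmult_indicator)
  finally have "c * emeasure M A + (\<integral>\<^sup>+x. (\<rho> x - c) * indicator A x \<partial>M) \<le> c * emeasure M A + 0"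
    using le[OF AS] by (simp add: add.commute)
  moreover have "c * emeasure M A \<noteq> \<infinity>"
    using c by (simp add: emeasure_eq_measure ennreal_mult_eq_top_iff)
  ultimately have "(\<integral>\<^sup>+x. (\<rho> x - c) * indicator A x \<partial>M) = 0"
    by (simp add: ennreal_add_left_cancel_le)
  then have "AE x in M. (\<rho> x - c) * indicator A x = 0"
    by (subst nn_integral_0_iff_AE[symmetric]) auto
  then show ?thesis
  proof (rule AE_mp, intro AE_I2 impI)
    fix x assume "x \<in> space M" "(\<rho> x - c) * indicator A x = 0"
    then show "\<rho> x \<le> c"
      by (cases "c < \<rho> x") (auto simp: A_def indicator_def dest: ennreal_minus_eq_0)
  qed
qed

lemma (in finite_measure) bounded_additive_measure:
  fixes \<kappa> :: "'a set \<Rightarrow> real"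
  assumes add: "additive (sets M) \<kappa>"
    and bnd: "\<And>A. A \<in> sets M \<Longrightarrow> 0 \<le> \<kappa> A \<and> \<kappa> A \<le> c * measure M A"
  obtains N where "sets N = sets M" "absolutely_continuous M N"
    "\<And>A. A \<in> sets M \<Longrightarrow> emeasure N A = ennreal (\<kappa> A)"
proof -
  have bnd': "\<bar>\<kappa> A\<bar> \<le> c * measure M A" if "A \<in> sets M" for A
    using bnd[OF that] by simp
  have pos: "positive (sets M) (\<lambda>A. ennreal (\<kappa> A))"
    using bnd[of "{}"] unfolding positive_def by simp
  have ca: "countably_additive (sets M) (\<lambda>A. ennreal (\<kappa> A))"
  proof (rule countably_additiveI)
    fix A :: "nat \<Rightarrow> 'a set" assume A: "range A \<subseteq> sets M" "disjoint_family A"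
    then show "(\<Sum>i. ennreal (\<kappa> (A i))) = ennreal (\<kappa> (\<Union>i. A i))"
      using sums_bounded_additive[OF add bnd' A] bnd by (intro suminf_ennreal_eq) auto
  qed
  define N where "N = measure_of (space M) (sets M) (\<lambda>A. ennreal (\<kappa> A))"
  have eN: "emeasure N A = ennreal (\<kappa> A)" if "A \<in> sets M" for A
    unfolding N_def by (rule emeasure_measure_of_sigma[OF sets.sigma_algebra_axioms pos ca that])
  have sN: "sets N = sets M"
    unfolding N_def by (simp add: sets_measure_of sets.space_closed)
  have "absolutely_continuous M N"
    unfolding absolutely_continuous_def
  proof
    fix A assume A: "A \<in> null_sets M"
    then have "measure M A = 0" "A \<in> sets M" by (auto simp: measure_def)
    then show "A \<in> null_sets N" using bnd[of A] eN sN by (auto simp: null_sets_def)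
  qed
  then show thesis by (rule that[OF sN _ eN])
qed

lemma (in finite_measure) bounded_additive_nonneg_has_density:
  fixes \<kappa> :: "'a set \<Rightarrow> real"
  assumes c: "0 \<le> c" and add: "additive (sets M) \<kappa>"
    and bnd: "\<And>A. A \<in> sets M \<Longrightarrow> 0 \<le> \<kappa> A \<and> \<kappa> A \<le> c * measure M A"
  obtains q where "q \<in> borel_measurable M" "\<And>x. 0 \<le> q x" "\<And>x. q x \<le> c"
    "\<And>A. A \<in> sets M \<Longrightarrow> \<kappa> A = (\<integral>x. indicator A x * q x \<partial>M)"
proof -
  obtain N where sN: "sets N = sets M" and ac: "absolutely_continuous M N"
    and eN: "\<And>A. A \<in> sets M \<Longrightarrow> emeasure N A = ennreal (\<kappa> A)"
    using bounded_additive_measure[OF add bnd] by blast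
  obtain \<rho> where \<rho>[measurable]: "\<rho> \<in> borel_measurable M" "density M \<rho> = N"
    using Radon_Nikodym[OF ac sN] by blast
  have \<rho>int: "(\<integral>\<^sup>+x. \<rho> x * indicator A x \<partial>M) = ennreal (\<kappa> A)" if "A \<in> sets M" for A
    using emeasure_density[OF \<rho>(1) that] \<rho>(2) eN[OF that] by simp
  have le: "AE x in M. \<rho> x \<le> ennreal c"
  proof (rule AE_le_of_nn_integral_indicator_le[OF \<rho>(1)])
    fix A assume AS: "A \<in> sets M"
    have "ennreal (\<kappa> A) \<le> ennreal (c * measure M A)" using bnd[OF AS] by (simp add: ennreal_leI)
    also have "\<dots> = ennreal c * emeasure M A" using c by (simp add: emeasure_eq_measure ennreal_mult)
    finally show "(\<integral>\<^sup>+x. \<rho> x * indicator A x \<partial>M) \<le> ennreal c * emeasure M A"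
      using \<rho>int[OF AS] by simp
  qed simp
  define q where "q x = enn2real (min (\<rho> x) (ennreal c))" for x
  have q: "0 \<le> q x" "q x \<le> c" for x using c by (auto simp: q_def intro!: enn2real_leI)
  have qm: "q \<in> borel_measurable M" unfolding q_def by measurable
  have "\<kappa> A = (\<integral>x. indicator A x * q x \<partial>M)" if AS: "A \<in> sets M" for A
  proof -
    have "(\<integral>\<^sup>+x. ennreal (indicator A x * q x) \<partial>M) = (\<integral>\<^sup>+x. \<rho> x * indicator A x \<partial>M)"
      using le
    proof (intro nn_integral_cong_AE, elim AE_mp, intro AE_I2 impI)
      fix x assume x: "\<rho> x \<le> ennreal c"
      then have "\<rho> x < top" using le_less_trans[OF x ennreal_less_top] by simp
      then show "ennreal (indicator A x * q x) = \<rho> x * indicator A x"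
        using x by (auto simp: q_def indicator_def min_absorb1 ennreal_enn2real)
    qed
    then show ?thesis
      using q bnd[OF AS] \<rho>int[OF AS] AS qm by (subst integral_eq_nn_integral) auto
  qed
  with qm q show thesis by (rule that)
qed

text \<open>The signed case reduces to the nonnegative function \<open>\<kappa> + B \<mu>\<close>, which is bounded
  by \<open>2 B \<mu>\<close>.\<close>

lemma (in finite_measure) bounded_additive_has_density:
  fixes \<kappa> :: "'a set \<Rightarrow> real"
  assumes B: "0 \<le> B" and add: "additive (sets M) \<kappa>"
    and bnd: "\<And>A. A \<in> sets M \<Longrightarrow> \<bar>\<kappa> A\<bar> \<le> B * measure M A"
  obtains r where "r \<in> borel_measurable M" "\<And>x. \<bar>r x\<bar> \<le> B"
    "\<And>A. A \<in> sets M \<Longrightarrow> \<kappa> A = (\<integral>x. indicator A x * r x \<partial>M)"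
proof -
  have shift_add: "additive (sets M) (\<lambda>A. \<kappa> A + B * measure M A)"
    using add by (auto simp: additive_def finite_measure_Union distrib_left)
  have shift_bnd: "0 \<le> \<kappa> A + B * measure M A \<and> \<kappa> A + B * measure M A \<le> (2*B) * measure M A"
    if "A \<in> sets M" for A
    using bnd[OF that] by (simp add: abs_le_iff del: mult_le_cancel_right)
  have "0 \<le> 2*B" using B by simp
  then obtain q where qm[measurable]: "q \<in> borel_measurable M"
    and q: "\<And>x. 0 \<le> q x" "\<And>x. q x \<le> 2*B"
    and qA: "\<And>A. A \<in> sets M \<Longrightarrow> \<kappa> A + B * measure M A = (\<integral>x. indicator A x * q x \<partial>M)"
    using bounded_additive_nonneg_has_density[OF _ shift_add shift_bnd] by blast
  have "\<kappa> A = (\<integral>x. indicator A x * (q x - B) \<partial>M)" if AS[measurable]: "A \<in> sets M" for A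
  proof -
    have "integrable M (\<lambda>x. indicator A x * q x)"
      using q B by (intro integrable_const_bound[where B="2*B"]) (auto simp: indicator_def)
    moreover have "integrable M (\<lambda>x. indicator A x * B)"
      using B by (intro integrable_const_bound[where B="B"]) (auto simp: indicator_def)
    ultimately have "(\<integral>x. indicator A x * (q x - B) \<partial>M)
        = (\<integral>x. indicator A x * q x \<partial>M) - (\<integral>x. indicator A x * B \<partial>M)"
      by (subst Bochner_Integration.integral_diff[symmetric]) (auto simp: algebra_simps)
    moreover have "(\<integral>x. indicator A x * B \<partial>M) = B * measure M A" using AS by simp
    ultimately show ?thesis using qA[OF AS] by linarith
  qed
  moreover have "\<bar>q x - B\<bar> \<le> B" for x using q[of x] by (simp add: abs_le_iff)
  ultimately show ?thesis using that[of "\<lambda>x. q x - B"] by simp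
qed

lemma (in finite_measure) bounded_additive_has_density_complex:
  fixes \<kappa> :: "'a set \<Rightarrow> complex"
  assumes B: "0 \<le> B" and add: "additive (sets M) \<kappa>"
    and bnd: "\<And>A. A \<in> sets M \<Longrightarrow> norm (\<kappa> A) \<le> B * measure M A"
  obtains h where "h \<in> borel_measurable M" "\<And>x. norm (h x) \<le> 2*B"
    "\<And>A. A \<in> sets M \<Longrightarrow> \<kappa> A = (\<integral>x. indicator A x *\<^sub>R h x \<partial>M)"
proof -
  have "additive (sets M) (\<lambda>A. Re (\<kappa> A))" using add by (simp add: additive_def)
  moreover have "\<bar>Re (\<kappa> A)\<bar> \<le> B * measure M A" if "A \<in> sets M" for A
    using abs_Re_le_cmod[of "\<kappa> A"] bnd[OF that] by linarith
  ultimately obtain rR where rR[measurable]: "rR \<in> borel_measurable M" "\<And>x. \<bar>rR x\<bar> \<le> B"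
    "\<And>A. A \<in> sets M \<Longrightarrow> Re (\<kappa> A) = (\<integral>x. indicator A x * rR x \<partial>M)"
    using bounded_additive_has_density[OF B] by blast
  have "additive (sets M) (\<lambda>A. Im (\<kappa> A))" using add by (simp add: additive_def)
  moreover have "\<bar>Im (\<kappa> A)\<bar> \<le> B * measure M A" if "A \<in> sets M" for A
    using abs_Im_le_cmod[of "\<kappa> A"] bnd[OF that] by linarith
  ultimately obtain rI where rI[measurable]: "rI \<in> borel_measurable M" "\<And>x. \<bar>rI x\<bar> \<le> B"
    "\<And>A. A \<in> sets M \<Longrightarrow> Im (\<kappa> A) = (\<integral>x. indicator A x * rI x \<partial>M)"
    using bounded_additive_has_density[OF B] by blast
  define h where "h x = complex_of_real (rR x) + \<i> * complex_of_real (rI x)" for x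
  have "h \<in> borel_measurable M" unfolding h_def by measurable
  moreover have "norm (h x) \<le> 2*B" for x
    using norm_triangle_ineq[of "complex_of_real (rR x)" "\<i> * complex_of_real (rI x)"] rR(2) rI(2)
    unfolding h_def by (simp add: norm_mult) (smt (verit))
  moreover have "\<kappa> A = (\<integral>x. indicator A x *\<^sub>R h x \<partial>M)" if A[measurable]: "A \<in> sets M" for A
  proof -
    have iR: "integrable M (\<lambda>x. complex_of_real (indicator A x * rR x))"
      using rR(2) B by (intro integrable_const_bound[where B=B]) (auto simp: indicator_def)
    have iI: "integrable M (\<lambda>x. \<i> * complex_of_real (indicator A x * rI x))"
      using rI(2) B by (intro integrable_const_bound[where B=B]) (auto simp: indicator_def norm_mult)
    have "(\<integral>x. indicator A x *\<^sub>R h x \<partial>M) =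
        (\<integral>x. complex_of_real (indicator A x * rR x) + \<i> * complex_of_real (indicator A x * rI x) \<partial>M)"
      by (intro Bochner_Integration.integral_cong) (auto simp: h_def indicator_def)
    also have "\<dots> = complex_of_real (\<integral>x. indicator A x * rR x \<partial>M)
        + \<i> * complex_of_real (\<integral>x. indicator A x * rI x \<partial>M)"
      by (simp only: Bochner_Integration.integral_add[OF iR iI] integral_mult_right_zero
          integral_complex_of_real)
    finally show ?thesis using rR(3) rI(3) A by (simp add: complex_eq_iff)
  qed
  ultimately show ?thesis using that by blast
qed

lemma L1_Rplus_iff_integrable:
  "L1_Rplus \<psi> \<longleftrightarrow> integrable lborel (\<lambda>t. indicator {0..} t *\<^sub>R \<psi> t)"
  unfolding L1_Rplus_def set_integrable_def ..

lemma borel_measurable_Linf_Rplus: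
  assumes "Linf_Rplus h" shows "(\<lambda>t. indicator {0..} t *\<^sub>R h t) \<in> borel_measurable borel"
  using assms unfolding Linf_Rplus_def set_borel_measurable_def by simp

lemma Linf_Rplus_bound:
  assumes "Linf_Rplus h"
  obtains C where "0 \<le> C" "AE t in lborel. norm (indicator {0..} t *\<^sub>R h t) \<le> C"
proof -
  obtain C0 where "AE t in lborel. t \<in> {0..} \<longrightarrow> norm (h t) \<le> C0"
    using assms unfolding Linf_Rplus_def by blast
  then have "AE t in lborel. norm (indicator {0..} t *\<^sub>R h t) \<le> max C0 0"
    by eventually_elim (auto simp: indicator_def)
  then show ?thesis using that[of "max C0 0"] by simp
qed

lemma Linf_RplusI:
  assumes "h \<in> borel_measurable borel" and "\<And>t. norm (h t) \<le> C"
  shows "Linf_Rplus h"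
  unfolding Linf_Rplus_def set_borel_measurable_def using assms
  by (auto intro!: exI[of _ C])

section \<open>A finite measure equivalent to Lebesgue measure on \<open>[0,\<infinity>)\<close>\<close>

definition weight :: "real \<Rightarrow> real" where
  "weight t = exp (- t) * indicator {0..} t"

definition weighted_lborel :: "real measure" where
  "weighted_lborel = density lborel (\<lambda>t. ennreal (weight t))"

lemma integrable_weight: "integrable lborel weight"
  using integrable.intros[OF has_bochner_integral_I0i_power_exp_m'[of 0]]
  unfolding weight_def[abs_def] by simp

lemma weight_nonneg [simp]: "0 \<le> weight t"
  by (simp add: weight_def)

lemma weight_le_1: "weight t \<le> 1"
  by (auto simp: weight_def indicator_def)

lemma borel_measurable_weight [measurable]: "weight \<in> borel_measurable borel"
  unfolding weight_def by measurable

lemma sets_weighted_lborel [simp, measurable_cong]: "sets weighted_lborel = sets borel"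
  by (simp add: weighted_lborel_def)

lemma space_weighted_lborel [simp]: "space weighted_lborel = UNIV"
  by (simp add: weighted_lborel_def)

lemma measurable_weighted_lborel_iff [simp]:
  "q \<in> borel_measurable weighted_lborel \<longleftrightarrow> q \<in> borel_measurable borel"
  by (simp only: measurable_cong_sets[OF sets_weighted_lborel refl])

lemma finite_measure_weighted_lborel: "finite_measure weighted_lborel"
proof
  have "emeasure weighted_lborel (space weighted_lborel) = (\<integral>\<^sup>+t. ennreal (weight t) \<partial>lborel)"
    by (simp add: weighted_lborel_def emeasure_density)
  also have "\<dots> = ennreal (\<integral>t. weight t \<partial>lborel)"
    using integrable_weight by (intro nn_integral_eq_integral) auto
  finally show "emeasure weighted_lborel (space weighted_lborel) \<noteq> \<infinity>" by simp
qed

lemma integral_weighted_lborel: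
  fixes f :: "real \<Rightarrow> 'b::{banach, second_countable_topology}"
  assumes "f \<in> borel_measurable borel"
  shows "integral\<^sup>L weighted_lborel f = (\<integral>t. weight t *\<^sub>R f t \<partial>lborel)"
  unfolding weighted_lborel_def using assms by (intro integral_density) auto

lemma integrable_weighted_lborel_iff:
  fixes f :: "real \<Rightarrow> 'b::{banach, second_countable_topology}"
  assumes "f \<in> borel_measurable borel"
  shows "integrable weighted_lborel f \<longleftrightarrow> integrable lborel (\<lambda>t. weight t *\<^sub>R f t)"
  unfolding weighted_lborel_def using assms by (intro integrable_density) auto

lemma integrable_weighted_lborelD:
  fixes q :: "real \<Rightarrow> 'b::{banach, second_countable_topology}"
  assumes "integrable weighted_lborel q"
  shows "integrable lborel (\<lambda>t. weight t *\<^sub>R q t)"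
proof -
  have "q \<in> borel_measurable borel" using borel_measurable_integrable[OF assms] by simp
  then show ?thesis using assms integrable_weighted_lborel_iff by blast
qed

lemma measure_weighted_lborel:
  assumes "A \<in> sets borel"
  shows "measure weighted_lborel A = (\<integral>t. indicator A t * weight t \<partial>lborel)"
proof -
  interpret finite_measure weighted_lborel by (rule finite_measure_weighted_lborel)
  have "measure weighted_lborel A = (\<integral>t. indicator A t \<partial>weighted_lborel)" using assms by simp
  also have "\<dots> = (\<integral>t. weight t *\<^sub>R indicator A t \<partial>lborel)"
    using assms by (intro integral_weighted_lborel borel_measurable_indicator)
  finally show ?thesis by (simp add: mult.commute)
qed

section \<open>Existence of weak* limits of translates\<close>

locale shift_limit =
  fixes g :: "real \<Rightarrow> complex" and F :: "real filter" and B :: real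
  assumes ultra: "ultrafilter F"
    and eventually_nonneg: "eventually (\<lambda>s. 0 \<le> s) F"
    and measurable_g: "(\<lambda>t. indicator {0..} t *\<^sub>R g t) \<in> borel_measurable borel"
    and bounded_g: "AE t in lborel. norm (indicator {0..} t *\<^sub>R g t) \<le> B"
    and nonneg_B: "0 \<le> B"
begin

definition g_plus :: "real \<Rightarrow> complex" where
  "g_plus t = indicator {0..} t *\<^sub>R g t"

definition pairing :: "real \<Rightarrow> (real \<Rightarrow> complex) \<Rightarrow> complex" where
  "pairing s p = (\<integral>t. g_plus (t + s) * p t \<partial>lborel)"

definition limit_functional :: "(real \<Rightarrow> complex) \<Rightarrow> complex" where
  "limit_functional p = Lim F (\<lambda>s. pairing s p)"

lemma borel_measurable_g_plus [measurable]: "g_plus \<in> borel_measurable borel"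
  using measurable_g unfolding g_plus_def[abs_def] .

lemma g_plus_translate_bound: "AE t in lborel. norm (g_plus (t + s)) \<le> B"
  using AE_lborel_translate[OF bounded_g[folded g_plus_def], of s] .

lemma F_not_bot: "F \<noteq> bot"
  using ultra by (simp add: ultrafilter_def)

lemma integrable_pairing: "integrable lborel p \<Longrightarrow> integrable lborel (\<lambda>t. g_plus (t + s) * p t)"
  by (rule integrable_bounded_mult[OF _ _ g_plus_translate_bound]) measurable

lemma norm_pairing_le: "integrable lborel p \<Longrightarrow> norm (pairing s p) \<le> B * (\<integral>t. norm (p t) \<partial>lborel)"
  unfolding pairing_def by (rule norm_integral_bounded_mult[OF _ _ g_plus_translate_bound nonneg_B]) measurable

lemma tendsto_limit_functional:
  assumes "integrable lborel p"
  shows "((\<lambda>s. pairing s p) \<longlongrightarrow> limit_functional p) F"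
proof -
  obtain L where "((\<lambda>s. pairing s p) \<longlongrightarrow> L) F"
    using ultrafilter_bounded_tendsto_exists[OF ultra, of "\<lambda>s. pairing s p"] norm_pairing_le[OF assms]
    by (auto intro!: always_eventually)
  moreover then have "limit_functional p = L"
    unfolding limit_functional_def using F_not_bot by (intro tendsto_Lim) auto
  ultimately show ?thesis by simp
qed

lemma limit_functional_eqI:
  assumes "integrable lborel p" "((\<lambda>s. pairing s p) \<longlongrightarrow> L) F"
  shows "limit_functional p = L"
  using tendsto_unique[OF F_not_bot tendsto_limit_functional[OF assms(1)] assms(2)] .

lemma limit_functional_add:
  assumes p: "integrable lborel p" and q: "integrable lborel q"
  shows "limit_functional (\<lambda>t. p t + q t) = limit_functional p + limit_functional q"
proof (rule limit_functional_eqI)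
  have "pairing s (\<lambda>t. p t + q t) = pairing s p + pairing s q" for s
    unfolding pairing_def using integrable_pairing[OF p, of s] integrable_pairing[OF q, of s]
    by (simp add: distrib_left)
  then show "((\<lambda>s. pairing s (\<lambda>t. p t + q t)) \<longlongrightarrow> limit_functional p + limit_functional q) F"
    using tendsto_add[OF tendsto_limit_functional[OF p] tendsto_limit_functional[OF q]] by simp
qed (use p q in simp)

lemma limit_functional_diff:
  assumes p: "integrable lborel p" and q: "integrable lborel q"
  shows "limit_functional (\<lambda>t. p t - q t) = limit_functional p - limit_functional q"
proof (rule limit_functional_eqI)
  have "pairing s (\<lambda>t. p t - q t) = pairing s p - pairing s q" for s
    unfolding pairing_def using integrable_pairing[OF p, of s] integrable_pairing[OF q, of s]
    by (simp add: right_diff_distrib)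
  then show "((\<lambda>s. pairing s (\<lambda>t. p t - q t)) \<longlongrightarrow> limit_functional p - limit_functional q) F"
    using tendsto_diff[OF tendsto_limit_functional[OF p] tendsto_limit_functional[OF q]] by simp
qed (use p q in simp)

lemma limit_functional_mult:
  assumes p: "integrable lborel p"
  shows "limit_functional (\<lambda>t. c * p t) = c * limit_functional p"
proof (rule limit_functional_eqI)
  have "pairing s (\<lambda>t. c * p t) = c * pairing s p" for s
    unfolding pairing_def by (simp add: mult.left_commute)
  then show "((\<lambda>s. pairing s (\<lambda>t. c * p t)) \<longlongrightarrow> c * limit_functional p) F"
    using tendsto_mult[OF tendsto_const tendsto_limit_functional[OF p]] by simp
qed (use p in simp)

lemma norm_limit_functional_le:
  assumes p: "integrable lborel p"
  shows "norm (limit_functional p) \<le> B * (\<integral>t. norm (p t) \<partial>lborel)"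
  using tendsto_upperbound[OF tendsto_norm[OF tendsto_limit_functional[OF p]] _ F_not_bot]
    norm_pairing_le[OF p] by (auto intro!: always_eventually)

lemma norm_limit_functional_diff_le:
  assumes p: "integrable lborel p" and q: "integrable lborel q"
  shows "norm (limit_functional p - limit_functional q) \<le> B * (\<integral>t. norm (p t - q t) \<partial>lborel)"
  using norm_limit_functional_le[of "\<lambda>t. p t - q t"] limit_functional_diff[OF p q] p q by simp

lemma eventually_pairing_eq:
  "eventually (\<lambda>s. pairing s (\<lambda>t. indicator {0..} t *\<^sub>R \<psi> t)
     = (LINT t:{0..}|lborel. g (t + s) * \<psi> t)) F"
  using eventually_nonneg
proof eventually_elim
  case (elim s)
  show ?case unfolding pairing_def set_lebesgue_integral_def
    by (intro Bochner_Integration.integral_cong) (use elim in \<open>auto simp: g_plus_def indicator_def\<close>)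
qed

definition weighted_indicator :: "real set \<Rightarrow> real \<Rightarrow> complex" where
  "weighted_indicator A t = complex_of_real (indicator A t * weight t)"

lemma integrable_weighted_indicator:
  assumes "A \<in> sets borel" shows "integrable lborel (weighted_indicator A)"
proof (rule Bochner_Integration.integrable_bound[OF integrable_weight])
  show "weighted_indicator A \<in> borel_measurable lborel"
    unfolding weighted_indicator_def[abs_def] using assms by measurable
  show "AE x in lborel. norm (weighted_indicator A x) \<le> norm (weight x)"
    using weight_le_1 by (auto simp: weighted_indicator_def indicator_def)
qed

lemma limit_functional_density:
  obtains h where "h \<in> borel_measurable borel" "\<And>t. norm (h t) \<le> 2*B"
    "\<And>A. A \<in> sets borel \<Longrightarrow>
       limit_functional (weighted_indicator A) = (\<integral>t. indicator A t *\<^sub>R h t \<partial>weighted_lborel)"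
proof -
  interpret finite_measure weighted_lborel by (rule finite_measure_weighted_lborel)
  have "additive (sets weighted_lborel) (\<lambda>A. limit_functional (weighted_indicator A))"
  proof (unfold additive_def, intro ballI impI)
    fix A C assume "A \<in> sets weighted_lborel" "C \<in> sets weighted_lborel" "A \<inter> C = {}"
    moreover from this have "weighted_indicator (A \<union> C) = (\<lambda>t. weighted_indicator A t + weighted_indicator C t)"
      by (auto simp: weighted_indicator_def fun_eq_iff indicator_def distrib_right)
    ultimately show "limit_functional (weighted_indicator (A \<union> C))
        = limit_functional (weighted_indicator A) + limit_functional (weighted_indicator C)"
      by (simp add: limit_functional_add integrable_weighted_indicator)
  qed
  moreover have "norm (limit_functional (weighted_indicator A)) \<le> B * measure weighted_lborel A"
    if "A \<in> sets weighted_lborel" for A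
  proof -
    have "norm (weighted_indicator A t) = indicator A t * weight t" for t
      unfolding weighted_indicator_def norm_of_real by (simp add: indicator_def)
    then show ?thesis
      using that norm_limit_functional_le[OF integrable_weighted_indicator, of A]
      by (simp add: measure_weighted_lborel)
  qed
  ultimately obtain h where "h \<in> borel_measurable weighted_lborel" "\<And>t. norm (h t) \<le> 2*B"
    "\<And>A. A \<in> sets weighted_lborel \<Longrightarrow>
       limit_functional (weighted_indicator A) = (\<integral>t. indicator A t *\<^sub>R h t \<partial>weighted_lborel)"
  proof (rule bounded_additive_has_density_complex[OF nonneg_B])
    fix h assume "h \<in> borel_measurable weighted_lborel" "\<And>t. norm (h t) \<le> 2*B"
      "\<And>A. A \<in> sets weighted_lborel \<Longrightarrow>
         limit_functional (weighted_indicator A) = (\<integral>t. indicator A t *\<^sub>R h t \<partial>weighted_lborel)"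
    then show thesis by (rule that)
  qed
  then show ?thesis using that by simp
qed

lemma tendsto_limit_functional_weighted:
  assumes s: "\<And>i. integrable weighted_lborel (s i)" and f: "integrable weighted_lborel f"
    and lim: "(\<lambda>i. \<integral>t. norm (s i t - f t) \<partial>weighted_lborel) \<longlonglongrightarrow> 0"
  shows "(\<lambda>i. limit_functional (\<lambda>t. weight t *\<^sub>R s i t)) \<longlonglongrightarrow> limit_functional (\<lambda>t. weight t *\<^sub>R f t)"
proof -
  have [measurable]: "f \<in> borel_measurable borel" "s i \<in> borel_measurable borel" for i
    using borel_measurable_integrable[OF f] borel_measurable_integrable[OF s] by simp_all
  have dist_le: "norm (limit_functional (\<lambda>t. weight t *\<^sub>R s i t) - limit_functional (\<lambda>t. weight t *\<^sub>R f t))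
      \<le> B * (\<integral>t. norm (s i t - f t) \<partial>weighted_lborel)" for i
  proof -
    have "(\<integral>t. norm (s i t - f t) \<partial>weighted_lborel)
        = (\<integral>t. norm (weight t *\<^sub>R s i t - weight t *\<^sub>R f t) \<partial>lborel)"
      by (subst integral_weighted_lborel) (auto simp: scaleR_diff_right[symmetric])
    then show ?thesis
      using norm_limit_functional_diff_le[OF integrable_weighted_lborelD[OF s] integrable_weighted_lborelD[OF f]]
      by simp
  qed
  have dist_lim: "(\<lambda>i. B * (\<integral>t. norm (s i t - f t) \<partial>weighted_lborel)) \<longlonglongrightarrow> 0"
    using tendsto_mult[OF tendsto_const[of B] lim] by simp
  have "(\<lambda>i. limit_functional (\<lambda>t. weight t *\<^sub>R s i t)
      - limit_functional (\<lambda>t. weight t *\<^sub>R f t)) \<longlonglongrightarrow> 0"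
    by (rule Lim_null_comparison[OF always_eventually dist_lim]) (use dist_le in blast)
  then show ?thesis by (simp add: LIM_zero_iff)
qed

lemma limit_functional_eq_integral:
  assumes hm[measurable]: "h \<in> borel_measurable borel" and hb: "\<And>t. norm (h t) \<le> 2*B"
    and hA: "\<And>A. A \<in> sets borel \<Longrightarrow>
       limit_functional (weighted_indicator A) = (\<integral>t. indicator A t *\<^sub>R h t \<partial>weighted_lborel)"
    and q: "integrable weighted_lborel q"
  shows "limit_functional (\<lambda>t. weight t *\<^sub>R q t) = (\<integral>t. q t * h t \<partial>weighted_lborel)"
  using q
proof (induct rule: integrable_induct)
  case (base A c)
  then have A: "A \<in> sets borel" by simp
  have "(\<lambda>t. weight t *\<^sub>R (indicator A t *\<^sub>R c)) = (\<lambda>t. c * weighted_indicator A t)"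
    by (auto simp: fun_eq_iff weighted_indicator_def indicator_def scaleR_conv_of_real)
  then have "limit_functional (\<lambda>t. weight t *\<^sub>R (indicator A t *\<^sub>R c))
      = c * (\<integral>t. indicator A t *\<^sub>R h t \<partial>weighted_lborel)"
    using limit_functional_mult[OF integrable_weighted_indicator[OF A]] hA[OF A] by simp
  also have "\<dots> = (\<integral>t. (indicator A t *\<^sub>R c) * h t \<partial>weighted_lborel)"
    by (subst integral_mult_right_zero[symmetric], intro Bochner_Integration.integral_cong)
       (auto simp: indicator_def)
  finally show ?case .
next
  case (add f1 f2)
  have hbA: "AE t in weighted_lborel. norm (h t) \<le> 2*B" using hb by simp
  have i1: "integrable weighted_lborel (\<lambda>t. h t * f1 t)"
    by (rule integrable_bounded_mult[OF add(1) _ hbA]) simp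
  have i2: "integrable weighted_lborel (\<lambda>t. h t * f2 t)"
    by (rule integrable_bounded_mult[OF add(3) _ hbA]) simp
  have "limit_functional (\<lambda>t. weight t *\<^sub>R (f1 t + f2 t))
      = limit_functional (\<lambda>t. weight t *\<^sub>R f1 t + weight t *\<^sub>R f2 t)"
    by (simp add: scaleR_right_distrib)
  also have "\<dots> = (\<integral>t. h t * f1 t \<partial>weighted_lborel) + (\<integral>t. h t * f2 t \<partial>weighted_lborel)"
    using add(2,4) limit_functional_add[OF integrable_weighted_lborelD[OF add(1)]
        integrable_weighted_lborelD[OF add(3)]]
    by (simp add: mult.commute)
  also have "\<dots> = (\<integral>t. (f1 t + f2 t) * h t \<partial>weighted_lborel)"
    using i1 i2 by (simp add: algebra_simps)
  finally show ?case .
next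
  case (lim f s)
  have fm[measurable]: "f \<in> borel_measurable borel"
    using borel_measurable_integrable[OF lim(5)] by simp
  have sm[measurable]: "s i \<in> borel_measurable borel" for i
    using borel_measurable_integrable[OF lim(1)] by simp
  have "(\<lambda>i. \<integral>t. s i t * h t \<partial>weighted_lborel) \<longlonglongrightarrow> (\<integral>t. f t * h t \<partial>weighted_lborel)"
  proof (rule integral_dominated_convergence[where w="\<lambda>x. 2 * norm (f x) * (2*B)"])
    show "AE x in weighted_lborel. norm (s i x * h x) \<le> 2 * norm (f x) * (2*B)" for i
    proof (intro AE_I2)
      fix x
      have "norm (s i x) * norm (h x) \<le> (2 * norm (f x)) * (2*B)"
        using lim(4)[of x i] hb nonneg_B by (intro mult_mono) auto
      then show "norm (s i x * h x) \<le> 2 * norm (f x) * (2*B)" by (simp add: norm_mult)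
    qed
  qed (use lim(3,5) in \<open>auto intro!: tendsto_mult_right\<close>)
  then have c1: "(\<lambda>i. limit_functional (\<lambda>t. weight t *\<^sub>R s i t)) \<longlonglongrightarrow> (\<integral>t. f t * h t \<partial>weighted_lborel)"
    using lim(2) by simp
  have "(\<lambda>i. \<integral>t. norm (s i t - f t) \<partial>weighted_lborel) \<longlonglongrightarrow> (\<integral>t. 0 \<partial>weighted_lborel)"
  proof (rule integral_dominated_convergence[where w="\<lambda>x. 3 * norm (f x)"])
    show "AE x in weighted_lborel. norm (norm (s i x - f x)) \<le> 3 * norm (f x)" for i
    proof (intro AE_I2)
      fix x
      have "norm (s i x - f x) \<le> norm (s i x) + norm (f x)" by (rule norm_triangle_ineq4)
      then show "norm (norm (s i x - f x)) \<le> 3 * norm (f x)" using lim(4)[of x i] by simp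
    qed
  qed (use lim(3,5) in \<open>auto intro!: tendsto_norm_zero simp: LIM_zero_iff\<close>)
  then have "(\<lambda>i. limit_functional (\<lambda>t. weight t *\<^sub>R s i t)) \<longlonglongrightarrow> limit_functional (\<lambda>t. weight t *\<^sub>R f t)"
    using tendsto_limit_functional_weighted[OF lim(1,5)] by simp
  then show ?case using c1 LIMSEQ_unique by blast
qed

lemma has_weakstar_shift_lim: "\<exists>h. weakstar_shift_lim F g h"
proof -
  obtain h where hm[measurable]: "h \<in> borel_measurable borel" and hb: "\<And>t. norm (h t) \<le> 2*B"
    and hA: "\<And>A. A \<in> sets borel \<Longrightarrow>
       limit_functional (weighted_indicator A) = (\<integral>t. indicator A t *\<^sub>R h t \<partial>weighted_lborel)"
    using limit_functional_density by blast
  have "weakstar_shift_lim F g h"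
    unfolding weakstar_shift_lim_def
  proof (intro conjI allI impI)
    show "Linf_Rplus h" using hb by (intro Linf_RplusI) auto
  next
    fix \<psi> assume "L1_Rplus \<psi>"
    then have \<psi>i: "integrable lborel (\<lambda>t. indicator {0..} t *\<^sub>R \<psi> t)"
      unfolding L1_Rplus_iff_integrable .
    define \<psi>b where "\<psi>b t = indicator {0..} t *\<^sub>R \<psi> t" for t
    have [measurable]: "\<psi>b \<in> borel_measurable borel"
      using borel_measurable_integrable[OF \<psi>i] unfolding \<psi>b_def[abs_def] by simp
    text \<open>The test function is written as \<open>weight \<cdot> q\<close>, with \<open>q = e\<^sup>t \<psi>\<close> integrable
      for the weighted measure.\<close>
    define q where "q t = complex_of_real (exp t) * \<psi>b t" for t
    have qm[measurable]: "q \<in> borel_measurable borel" unfolding q_def[abs_def] by measurable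
    have Wq: "weight t *\<^sub>R q t = \<psi>b t" for t
      by (auto simp: weight_def q_def \<psi>b_def indicator_def scaleR_conv_of_real exp_minus field_simps)
    have qi: "integrable weighted_lborel q"
      using \<psi>i unfolding integrable_weighted_lborel_iff[OF qm] Wq \<psi>b_def .
    have "limit_functional \<psi>b = limit_functional (\<lambda>t. weight t *\<^sub>R q t)" unfolding Wq by simp
    also have "\<dots> = (\<integral>t. q t * h t \<partial>weighted_lborel)"
      by (rule limit_functional_eq_integral[OF hm hb hA qi])
    also have "\<dots> = (\<integral>t. (weight t *\<^sub>R q t) * h t \<partial>lborel)"
      by (subst integral_weighted_lborel) (auto simp: scaleR_conv_of_real mult.assoc)
    also have "\<dots> = (LINT t:{0..}|lborel. h t * \<psi> t)"
      unfolding set_lebesgue_integral_def Wq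
      by (intro Bochner_Integration.integral_cong) (auto simp: \<psi>b_def indicator_def)
    finally have lam: "limit_functional \<psi>b = (LINT t:{0..}|lborel. h t * \<psi> t)" .
    show "((\<lambda>s. LINT t:{0..}|lborel. g (t + s) * \<psi> t) \<longlongrightarrow> (LINT t:{0..}|lborel. h t * \<psi> t)) F"
      using tendsto_limit_functional[OF \<psi>i] lam eventually_pairing_eq[of \<psi>]
      by (simp add: tendsto_cong \<psi>b_def[abs_def])
  qed
  then show ?thesis by blast
qed

end

lemma weakstar_shift_lim_exists:
  assumes "ultrafilter F" "eventually (\<lambda>s. 0 \<le> s) F" "Linf_Rplus g"
  shows "\<exists>h. weakstar_shift_lim F g h"
proof -
  obtain C where "0 \<le> C" "AE t in lborel. norm (indicator {0..} t *\<^sub>R g t) \<le> C"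
    using Linf_Rplus_bound[OF assms(3)] by blast
  then interpret shift_limit g F C
    using assms(1,2) borel_measurable_Linf_Rplus[OF assms(3)] by unfold_locales auto
  show ?thesis by (rule has_weakstar_shift_lim)
qed

section \<open>Uniqueness and bounds of weak* limits\<close>

lemma borel_measurable_cnj [measurable]:
  fixes f :: "'a \<Rightarrow> complex"
  assumes "f \<in> borel_measurable M" shows "(\<lambda>x. cnj (f x)) \<in> borel_measurable M"
  using measurable_compose[OF assms borel_measurable_continuous_onI[OF continuous_on_cnj[OF continuous_on_id]]]
  by (simp add: o_def)

lemma AE_eq_0_of_weighted_integral_nonpos:
  fixes q :: "real \<Rightarrow> real"
  assumes "q \<in> borel_measurable borel" and q0: "\<And>t. 0 \<le> q t"
    and qi: "integrable lborel (\<lambda>t. q t * weight t)" and le: "(\<integral>t. q t * weight t \<partial>lborel) \<le> 0"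
  shows "AE t in lborel. 0 \<le> t \<longrightarrow> q t = 0"
proof -
  have "(\<integral>t. q t * weight t \<partial>lborel) = 0"
    using le integral_nonneg_AE[of "\<lambda>t. q t * weight t" lborel] q0 by (auto intro!: antisym)
  then have "AE t in lborel. q t * weight t = 0"
    using integral_nonneg_eq_0_iff_AE[OF qi] q0 by auto
  then show ?thesis
    by eventually_elim (auto simp: weight_def)
qed

lemma integrable_bounded_mult_weight:
  fixes G :: "real \<Rightarrow> complex"
  assumes "G \<in> borel_measurable borel" "AE t in lborel. norm (G t) \<le> C"
  shows "integrable lborel (\<lambda>t. G t * complex_of_real (weight t))"
proof (rule integrable_bounded_mult[OF _ _ assms(2)])
  show "integrable lborel (\<lambda>t. complex_of_real (weight t))" using integrable_weight by simp
qed (use assms(1) in simp)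

lemma L1_Rplus_bounded_mult_weight:
  fixes G :: "real \<Rightarrow> complex"
  assumes "G \<in> borel_measurable borel" "AE t in lborel. norm (G t) \<le> C"
  shows "L1_Rplus (\<lambda>t. G t * complex_of_real (weight t))"
  unfolding L1_Rplus_iff_integrable
  using integrable_bounded_mult_weight[OF assms]
  by (rule Bochner_Integration.integrable_cong[THEN iffD1, rotated 2]) (auto simp: weight_def indicator_def)

text \<open>Testing against \<open>\<psi> = cnj(h\<^sub>1 - h\<^sub>2) \<cdot> weight\<close> shows that
  \<open>L\<^sup>1(\<real>\<^sub>+)\<close> separates the points of \<open>L\<^sup>\<infinity>(\<real>\<^sub>+)\<close>.\<close>

lemma Linf_Rplus_AE_eq_of_pairings_eq:
  fixes h1 h2 :: "real \<Rightarrow> complex"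
  assumes h1: "Linf_Rplus h1" and h2: "Linf_Rplus h2"
    and eq: "\<And>\<psi>. L1_Rplus \<psi> \<Longrightarrow>
      (LINT t:{0..}|lborel. h1 t * \<psi> t) = (LINT t:{0..}|lborel. h2 t * \<psi> t)"
  shows "AE t in lborel. t \<in> {0..} \<longrightarrow> h1 t = h2 t"
proof -
  define b1 where "b1 t = indicator {0..} t *\<^sub>R h1 t" for t
  define b2 where "b2 t = indicator {0..} t *\<^sub>R h2 t" for t
  have [measurable]: "b1 \<in> borel_measurable borel" "b2 \<in> borel_measurable borel"
    unfolding b1_def[abs_def] b2_def[abs_def]
    by (fact borel_measurable_Linf_Rplus[OF h1] borel_measurable_Linf_Rplus[OF h2])+
  obtain C1 C2 where C1: "AE t in lborel. norm (b1 t) \<le> C1" and C2: "AE t in lborel. norm (b2 t) \<le> C2"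
    using Linf_Rplus_bound[OF h1] Linf_Rplus_bound[OF h2] unfolding b1_def b2_def by metis
  define D where "D t = b1 t - b2 t" for t
  have Db: "AE t in lborel. norm (cnj (D t)) \<le> C1 + C2"
    using C1 C2 by eventually_elim (auto simp: D_def intro: order_trans[OF norm_triangle_ineq4])
  define \<psi> where "\<psi> t = cnj (D t) * complex_of_real (weight t)" for t
  have \<psi>i: "integrable lborel \<psi>"
    unfolding \<psi>_def[abs_def] by (rule integrable_bounded_mult_weight[OF _ Db]) (simp add: D_def)
  have i1: "integrable lborel (\<lambda>t. b1 t * \<psi> t)" by (rule integrable_bounded_mult[OF \<psi>i _ C1]) simp
  have i2: "integrable lborel (\<lambda>t. b2 t * \<psi> t)" by (rule integrable_bounded_mult[OF \<psi>i _ C2]) simp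
  have pw: "b1 t * \<psi> t - b2 t * \<psi> t = complex_of_real ((norm (D t))\<^sup>2 * weight t)" for t
    unfolding \<psi>_def D_def
    by (simp only: left_diff_distrib[symmetric] mult.assoc[symmetric] complex_norm_square of_real_mult)
  have "(LINT t:{0..}|lborel. h1 t * \<psi> t) - (LINT t:{0..}|lborel. h2 t * \<psi> t)
      = (\<integral>t. b1 t * \<psi> t - b2 t * \<psi> t \<partial>lborel)"
    unfolding set_lebesgue_integral_def b1_def b2_def using i1 i2
    by (subst Bochner_Integration.integral_diff) (simp_all add: b1_def b2_def mult.assoc)
  also have "\<dots> = complex_of_real (\<integral>t. (norm (D t))\<^sup>2 * weight t \<partial>lborel)"
    unfolding pw by (rule integral_complex_of_real)
  finally have "(\<integral>t. (norm (D t))\<^sup>2 * weight t \<partial>lborel) = 0"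
    using eq[OF L1_Rplus_bounded_mult_weight[OF _ Db]] by (simp add: \<psi>_def D_def)
  moreover have "integrable lborel (\<lambda>t. (norm (D t))\<^sup>2 * weight t)"
    using Bochner_Integration.integrable_diff[OF i1 i2] unfolding pw
    by (simp only: complex_of_real_integrable_eq)
  ultimately have "AE t in lborel. 0 \<le> t \<longrightarrow> (norm (D t))\<^sup>2 = 0"
    by (intro AE_eq_0_of_weighted_integral_nonpos) (auto simp: D_def)
  then show ?thesis by eventually_elim (auto simp: D_def b1_def b2_def)
qed

lemma weakstar_shift_lim_unique:
  assumes "F \<noteq> bot" "weakstar_shift_lim F g h1" "weakstar_shift_lim F g h2"
  shows "AE t in lborel. t \<in> {0..} \<longrightarrow> h1 t = h2 t"
  using assms unfolding weakstar_shift_lim_def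
  by (intro Linf_Rplus_AE_eq_of_pairings_eq) (auto intro: tendsto_unique)

lemma AE_le_of_weighted_superlevel_integral_le:
  fixes v :: "real \<Rightarrow> real" and B C :: real
  defines "A \<equiv> {t. 0 \<le> t \<and> B < v t}"
  assumes [measurable]: "v \<in> borel_measurable borel" and bnd: "AE t in lborel. v t \<le> C" and B: "0 \<le> B"
    and le: "(\<integral>t. indicator A t * v t * weight t \<partial>lborel) \<le> B * (\<integral>t. indicator A t * weight t \<partial>lborel)"
  shows "AE t in lborel. 0 \<le> t \<longrightarrow> v t \<le> B"
proof -
  have [measurable]: "A \<in> sets borel" unfolding A_def by measurable
  have iAW: "integrable lborel (\<lambda>t. indicator A t * weight t)"
    by (rule Bochner_Integration.integrable_bound[OF integrable_weight]) (auto simp: indicator_def)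
  have iAvW: "integrable lborel (\<lambda>t. indicator A t * v t * weight t)"
  proof (rule Bochner_Integration.integrable_bound[of _ "\<lambda>t. C * weight t"])
    show "AE t in lborel. norm (indicator A t * v t * weight t) \<le> norm (C * weight t)"
      using bnd by eventually_elim (use B in \<open>auto simp: A_def indicator_def abs_mult intro!: mult_right_mono\<close>)
  qed (use integrable_weight in simp_all)
  define q where "q t = indicator A t * (v t - B)" for t
  have eq: "(\<lambda>t. q t * weight t) = (\<lambda>t. indicator A t * v t * weight t - B * (indicator A t * weight t))"
    by (auto simp: q_def fun_eq_iff algebra_simps)
  have "AE t in lborel. 0 \<le> t \<longrightarrow> q t = 0"
  proof (rule AE_eq_0_of_weighted_integral_nonpos)
    show "q \<in> borel_measurable borel" unfolding q_def[abs_def] by measurable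
    show "0 \<le> q t" for t by (auto simp: q_def A_def indicator_def)
    show "integrable lborel (\<lambda>t. q t * weight t)" unfolding eq using iAvW iAW by simp
    show "(\<integral>t. q t * weight t \<partial>lborel) \<le> 0" unfolding eq using iAvW iAW le by simp
  qed
  then show ?thesis
    by eventually_elim (auto simp: q_def A_def indicator_def split: if_splits)
qed

text \<open>The dual estimate: testing against \<open>\<psi> = cnj h / \<bar>h\<bar> \<cdot> weight\<close> on the set where
  \<open>\<bar>h\<bar> > B\<close> shows that this set is null.\<close>

lemma Linf_Rplus_bound_of_pairings_bound:
  fixes h :: "real \<Rightarrow> complex"
  assumes hL: "Linf_Rplus h" and B: "0 \<le> B"
    and pairing_le: "\<And>\<psi>. L1_Rplus \<psi> \<Longrightarrow>
      norm (LINT t:{0..}|lborel. h t * \<psi> t) \<le> B * (\<integral>t. norm (indicator {0..} t *\<^sub>R \<psi> t) \<partial>lborel)"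
  shows "AE t in lborel. norm (indicator {0..} t *\<^sub>R h t) \<le> B"
proof -
  define hb where "hb t = indicator {0..} t *\<^sub>R h t" for t
  have [measurable]: "hb \<in> borel_measurable borel"
    unfolding hb_def[abs_def] by (rule borel_measurable_Linf_Rplus[OF hL])
  obtain C where C: "AE t in lborel. norm (hb t) \<le> C"
    using Linf_Rplus_bound[OF hL] unfolding hb_def by blast
  define A where "A = {t. 0 \<le> t \<and> B < norm (hb t)}"
  have [measurable]: "A \<in> sets borel" unfolding A_def by measurable
  define u where "u t = (if t \<in> A then cnj (hb t) / complex_of_real (norm (hb t)) else 0)" for t
  have [measurable]: "u \<in> borel_measurable borel" unfolding u_def[abs_def] by measurable
  have pw1: "indicator {0..} t *\<^sub>R (h t * (u t * complex_of_real (weight t)))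
      = complex_of_real (indicator A t * norm (hb t) * weight t)" for t
  proof (cases "t \<in> A")
    case True
    then have "0 \<le> t" "hb t \<noteq> 0" using B by (auto simp: A_def)
    moreover have "hb t * cnj (hb t) = complex_of_real (norm (hb t) * norm (hb t))"
      using complex_norm_square[of "hb t"] by (simp add: power2_eq_square)
    ultimately show ?thesis using True by (simp add: u_def hb_def indicator_def field_simps)
  qed (simp add: u_def)
  have pw2: "norm (indicator {0..} t *\<^sub>R (u t * complex_of_real (weight t))) = indicator A t * weight t" for t
    using B by (auto simp: u_def A_def norm_mult norm_divide indicator_def)
  have "norm (LINT t:{0..}|lborel. h t * (u t * complex_of_real (weight t)))
      \<le> B * (\<integral>t. indicator A t * weight t \<partial>lborel)"
    using pairing_le[OF L1_Rplus_bounded_mult_weight[of u 1]] unfolding pw2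
    by (auto simp: u_def norm_divide)
  moreover have "(LINT t:{0..}|lborel. h t * (u t * complex_of_real (weight t)))
      = complex_of_real (\<integral>t. indicator A t * norm (hb t) * weight t \<partial>lborel)"
    unfolding set_lebesgue_integral_def pw1 by (rule integral_complex_of_real)
  ultimately have "(\<integral>t. indicator A t * norm (hb t) * weight t \<partial>lborel)
      \<le> B * (\<integral>t. indicator A t * weight t \<partial>lborel)"
    by simp
  then have "AE t in lborel. 0 \<le> t \<longrightarrow> norm (hb t) \<le> B"
    using AE_le_of_weighted_superlevel_integral_le[where v="\<lambda>t. norm (hb t)" and B=B and C=C] C B
    unfolding A_def by simp
  then show ?thesis
    by eventually_elim (use B in \<open>auto simp: hb_def indicator_def\<close>)
qed

lemma (in shift_limit) weakstar_shift_lim_bound: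
  assumes ws: "weakstar_shift_lim F g h"
  shows "AE t in lborel. norm (indicator {0..} t *\<^sub>R h t) \<le> B"
proof (rule Linf_Rplus_bound_of_pairings_bound[OF _ nonneg_B])
  show "Linf_Rplus h" using ws unfolding weakstar_shift_lim_def by blast
  fix \<psi> assume \<psi>: "L1_Rplus \<psi>"
  then have \<psi>i: "integrable lborel (\<lambda>t. indicator {0..} t *\<^sub>R \<psi> t)"
    unfolding L1_Rplus_iff_integrable .
  have "((\<lambda>s. pairing s (\<lambda>t. indicator {0..} t *\<^sub>R \<psi> t)) \<longlongrightarrow> (LINT t:{0..}|lborel. h t * \<psi> t)) F"
    using ws \<psi> eventually_pairing_eq[of \<psi>] unfolding weakstar_shift_lim_def
    by (auto simp: tendsto_cong)
  then show "norm (LINT t:{0..}|lborel. h t * \<psi> t) \<le> B * (\<integral>t. norm (indicator {0..} t *\<^sub>R \<psi> t) \<partial>lborel)"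
    using tendsto_upperbound[OF tendsto_norm _ F_not_bot] norm_pairing_le[OF \<psi>i]
    by (auto intro!: always_eventually)
qed

section \<open>Integrals against bounded functions: Fubini and left tails\<close>

lemma integrable_convolution_kernel:
  fixes a b G :: "real \<Rightarrow> complex"
  assumes a: "integrable lborel a" and b: "integrable lborel b"
    and Gm[measurable]: "G \<in> borel_measurable borel" and Gb: "AE z in lborel. norm (G z) \<le> C"
    and C: "0 \<le> C"
  shows "integrable (lborel \<Otimes>\<^sub>M lborel) (\<lambda>(y,z). a y * G z * b (y - z))"
proof (rule lborel_pair.Fubini_integrable)
  have [measurable]: "a \<in> borel_measurable borel" "b \<in> borel_measurable borel"
    using borel_measurable_integrable[OF a] borel_measurable_integrable[OF b] by simp_all
  show "(\<lambda>(y,z). a y * G z * b (y - z)) \<in> borel_measurable (lborel \<Otimes>\<^sub>M lborel)" by measurable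
  have bz: "integrable lborel (\<lambda>z. b (y - z))" for y by (rule integrable_lborel_reflect[OF b])
  show "AE y in lborel. integrable lborel (\<lambda>z. case (y, z) of (y, z) \<Rightarrow> a y * G z * b (y - z))"
    using integrable_bounded_mult[OF bz _ Gb] by (simp add: mult.assoc)
  show "integrable lborel (\<lambda>y. \<integral>z. norm (case (y, z) of (y, z) \<Rightarrow> a y * G z * b (y - z)) \<partial>lborel)"
  proof (rule Bochner_Integration.integrable_bound[of _ "\<lambda>y. (C * (\<integral>x. norm (b x) \<partial>lborel)) * norm (a y)"])
    show "AE y in lborel. norm (\<integral>z. norm (case (y, z) of (y, z) \<Rightarrow> a y * G z * b (y - z)) \<partial>lborel)
        \<le> norm ((C * (\<integral>x. norm (b x) \<partial>lborel)) * norm (a y))"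
    proof (intro AE_I2)
      fix y
      have "(\<integral>z. norm (a y * G z * b (y - z)) \<partial>lborel) \<le> (\<integral>z. norm (a y) * C * norm (b (y - z)) \<partial>lborel)"
      proof (rule integral_mono_AE')
        show "AE z in lborel. norm (a y * G z * b (y - z)) \<le> norm (a y) * C * norm (b (y - z))"
          using Gb by eventually_elim (auto simp: norm_mult intro!: mult_right_mono mult_left_mono)
      qed (use bz[of y] C in simp_all)
      also have "\<dots> = norm (a y) * C * (\<integral>x. norm (b x) \<partial>lborel)"
        using lborel_integral_reflect[of "\<lambda>x. norm (b x)" y] by simp
      finally show "norm (\<integral>z. norm (case (y, z) of (y, z) \<Rightarrow> a y * G z * b (y - z)) \<partial>lborel)
          \<le> norm ((C * (\<integral>x. norm (b x) \<partial>lborel)) * norm (a y))"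
        using C by (simp add: abs_mult mult_ac)
    qed
  qed (use a in simp_all)
qed

lemma integral_convolution_swap:
  fixes a b G :: "real \<Rightarrow> complex"
  assumes a: "integrable lborel a" and b: "integrable lborel b"
    and Gm: "G \<in> borel_measurable borel" and Gb: "AE z in lborel. norm (G z) \<le> C" and C: "0 \<le> C"
  shows "(\<integral>y. a y * (\<integral>z. G z * b (y - z) \<partial>lborel) \<partial>lborel)
       = (\<integral>z. G z * (\<integral>y. a y * b (y - z) \<partial>lborel) \<partial>lborel)"
proof -
  have "(\<integral>z. (\<integral>y. a y * G z * b (y - z) \<partial>lborel) \<partial>lborel)
      = (\<integral>y. (\<integral>z. a y * G z * b (y - z) \<partial>lborel) \<partial>lborel)"
    using lborel_pair.Fubini_integral[OF integrable_convolution_kernel[OF a b Gm Gb C]] by simp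
  moreover have "(\<integral>z. a y * G z * b (y - z) \<partial>lborel) = a y * (\<integral>z. G z * b (y - z) \<partial>lborel)" for y
    by (simp add: mult.assoc)
  moreover have "(\<integral>y. a y * G z * b (y - z) \<partial>lborel) = G z * (\<integral>y. a y * b (y - z) \<partial>lborel)" for z
    by (simp add: mult.commute mult.left_commute)
  ultimately show ?thesis by simp
qed

lemma integrable_correlation:
  fixes a b :: "real \<Rightarrow> complex"
  assumes a: "integrable lborel a" and b: "integrable lborel b"
  shows "integrable lborel (\<lambda>z. \<integral>y. a y * b (y - z) \<partial>lborel)"
  using lborel_pair.integrable_snd[OF integrable_convolution_kernel[OF a b, of "\<lambda>_. 1" 1]] by simp

lemma tendsto_integral_left_tail:
  fixes \<Phi> :: "real \<Rightarrow> 'a::{banach, second_countable_topology}"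
  assumes \<Phi>i: "integrable lborel \<Phi>"
  shows "(\<lambda>K. \<integral>z. norm (indicator {..< - real K} z *\<^sub>R \<Phi> z) \<partial>lborel) \<longlonglongrightarrow> 0"
proof -
  have "(\<lambda>K. \<integral>z. norm (indicator {..< - real K} z *\<^sub>R \<Phi> z) \<partial>lborel) \<longlonglongrightarrow> (\<integral>z. (0::real) \<partial>(lborel::real measure))"
  proof (rule Bochner_Integration.integral_dominated_convergence[where w="\<lambda>z. norm (\<Phi> z)"
        and s="\<lambda>K z. norm (indicator {..< - real K} z *\<^sub>R \<Phi> z)" and f="\<lambda>z. 0"])
    show "(\<lambda>z. norm (indicator {..< - real K} z *\<^sub>R \<Phi> z)) \<in> borel_measurable lborel" for K
      using borel_measurable_integrable[OF \<Phi>i] by measurable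
    show "AE z in lborel. (\<lambda>K. norm (indicator {..< - real K} z *\<^sub>R \<Phi> z)) \<longlonglongrightarrow> 0"
    proof (intro AE_I2 tendsto_eventually)
      fix z :: real
      obtain N :: nat where "- z < real N" using reals_Archimedean2 by blast
      then show "eventually (\<lambda>K. norm (indicator {..< - real K} z *\<^sub>R \<Phi> z) = 0) sequentially"
        unfolding eventually_sequentially by (intro exI[of _ N]) (auto simp: indicator_def)
    qed
  qed (use \<Phi>i in \<open>auto simp: indicator_def\<close>)
  then show ?thesis by simp
qed

lemma norm_integral_left_tail_le:
  fixes G \<Phi> :: "real \<Rightarrow> complex"
  assumes \<Phi>i: "integrable lborel \<Phi>" and Gm[measurable]: "G \<in> borel_measurable borel"
    and Gb: "AE z in lborel. norm (G z) \<le> C" and C: "0 \<le> C"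
  shows "norm ((\<integral>z. G z * \<Phi> z \<partial>lborel) - (\<integral>z. indicator {a..} z *\<^sub>R (G z * \<Phi> z) \<partial>lborel))
    \<le> C * (\<integral>z. norm (indicator {..<a} z *\<^sub>R \<Phi> z) \<partial>lborel)"
proof -
  have Ti: "integrable lborel (\<lambda>z. indicator {..<a} z *\<^sub>R \<Phi> z)"
    by (intro integrable_mult_indicator \<Phi>i) simp
  have G\<Phi>i: "integrable lborel (\<lambda>z. G z * \<Phi> z)" by (rule integrable_bounded_mult[OF \<Phi>i _ Gb]) simp
  have "(\<integral>z. G z * \<Phi> z \<partial>lborel) - (\<integral>z. indicator {a..} z *\<^sub>R (G z * \<Phi> z) \<partial>lborel)
      = (\<integral>z. G z * \<Phi> z - indicator {a..} z *\<^sub>R (G z * \<Phi> z) \<partial>lborel)"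
    by (rule Bochner_Integration.integral_diff[symmetric])
       (use G\<Phi>i integrable_mult_indicator[OF _ G\<Phi>i, of "{a..}"] in simp_all)
  also have "\<dots> = (\<integral>z. G z * (indicator {..<a} z *\<^sub>R \<Phi> z) \<partial>lborel)"
    by (intro Bochner_Integration.integral_cong) (auto simp: indicator_def)
  finally show ?thesis using norm_integral_bounded_mult[OF Ti _ Gb C] by simp
qed

section \<open>The points \<open>\<tau>\<^sup>-\<^sup>N \<omega>\<close>\<close>

locale Omega_point =
  fixes \<eta> :: "nat filter" and u :: real
  assumes free_eta: "free_ultrafilter_nat \<eta>" and u: "u \<in> {0..1}"
begin

definition lattice_point :: "nat \<Rightarrow> real" where
  "lattice_point n = u + real n"

text \<open>For \<open>N = 0\<close> we keep the representative \<open>(\<eta>, u)\<close>: \<open>tau_s 0\<close> maps \<open>(\<eta>, 1)\<close> to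
  \<open>(\<tau> \<eta>, 0)\<close>, which is the same point of \<open>\<Omega>\<^sup>*\<close> but a different pair.\<close>

definition shifted_point :: "nat \<Rightarrow> nat filter \<times> real" where
  "shifted_point N = (if N = 0 then (\<eta>, u) else tau_s (- real N) (\<eta>, u))"

definition point_filter :: "nat \<Rightarrow> real filter" where
  "point_filter N = omega_filter (shifted_point N)"

lemma ultrafilter_eta: "ultrafilter \<eta>"
  using free_eta unfolding free_ultrafilter_nat_def by blast

lemma eventually_ge_eta: "eventually (\<lambda>n. M \<le> n) \<eta>"
proof -
  have "eventually (\<lambda>n. M \<le> n) cofinite"
    unfolding eventually_cofinite by (simp add: not_le)
  then show ?thesis using free_eta unfolding free_ultrafilter_nat_def by (auto simp: le_filter_def)
qed

lemma point_filter_eq_filtermap: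
  obtains \<rho> where "point_filter N = filtermap \<rho> \<eta>" "\<And>n. 0 \<le> \<rho> n"
    "\<And>n. N \<le> n \<Longrightarrow> \<rho> n = lattice_point n - real N"
proof (cases "N = 0")
  case True
  then show ?thesis using u
    by (intro that[of lattice_point])
       (auto simp: point_filter_def shifted_point_def omega_filter_def lattice_point_def[abs_def])
next
  case False
  define k where "k = \<lfloor>u + - real N\<rfloor>"
  define v where "v = u + - real N - of_int k"
  have "- int N \<le> k" unfolding k_def using u by (simp add: le_floor_iff)
  then have "real (nat (int n + k)) = real n + of_int k" if "N \<le> n" for n
    using that by simp
  moreover have "point_filter N = filtermap (\<lambda>n. v + real (nat (int n + k))) \<eta>"
    using False unfolding point_filter_def shifted_point_def tau_s_def omega_filter_def tau_pow_def v_def k_def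
    by (simp add: filtermap_filtermap)
  moreover have "0 \<le> v" unfolding v_def k_def by linarith
  ultimately show ?thesis
    by (intro that[of "\<lambda>n. v + real (nat (int n + k))"]) (auto simp: v_def lattice_point_def)
qed

lemma ultrafilter_point_filter: "ultrafilter (point_filter N)"
  by (metis point_filter_eq_filtermap ultrafilter_filtermap ultrafilter_eta)

lemma point_filter_not_bot: "point_filter N \<noteq> bot"
  using ultrafilter_point_filter unfolding ultrafilter_def by blast

lemma eventually_nonneg_point_filter: "eventually (\<lambda>s. 0 \<le> s) (point_filter N)"
  by (metis point_filter_eq_filtermap eventually_filtermap always_eventually)

lemma tendsto_point_filter_iff:
  "(Q \<longlongrightarrow> L) (point_filter N) \<longleftrightarrow> ((\<lambda>n. Q (lattice_point n - real N)) \<longlongrightarrow> L) \<eta>"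
proof -
  obtain \<rho> where \<rho>: "point_filter N = filtermap \<rho> \<eta>" "\<And>n. N \<le> n \<Longrightarrow> \<rho> n = lattice_point n - real N"
    using point_filter_eq_filtermap by blast
  have "eventually (\<lambda>n. Q (\<rho> n) = Q (lattice_point n - real N)) \<eta>"
    using eventually_ge_eta[of N] by eventually_elim (simp add: \<rho>(2))
  then show ?thesis unfolding \<rho>(1) filterlim_filtermap by (rule tendsto_cong)
qed

lemma weakstar_shift_lim_g_omega:
  assumes "Linf_Rplus g"
  shows "weakstar_shift_lim (point_filter N) g (g_omega g (shifted_point N))"
  using someI_ex[OF weakstar_shift_lim_exists[OF ultrafilter_point_filter eventually_nonneg_point_filter assms]]
  unfolding g_omega_def point_filter_def .

lemma g_omega_AE_eq:
  assumes "weakstar_shift_lim (point_filter N) g h"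
  shows "AE t in lborel. t \<in> {0..} \<longrightarrow> g_omega g (shifted_point N) t = h t"
proof (rule weakstar_shift_lim_unique[OF point_filter_not_bot _ assms])
  show "weakstar_shift_lim (point_filter N) g (g_omega g (shifted_point N))"
    using someI[of "weakstar_shift_lim (point_filter N) g", OF assms]
    unfolding g_omega_def point_filter_def .
qed

definition block_index :: "real \<Rightarrow> nat" where
  "block_index x = (if 0 \<le> x then 0 else nat \<lceil>- x\<rceil>)"

lemma block_index_nonneg: "0 \<le> x + real (block_index x)"
  by (auto simp: block_index_def) linarith

lemma block_index_eq_iff:
  assumes "x < 0" "1 \<le> N"
  shows "block_index x = N \<longleftrightarrow> x \<in> {- real N..<- real N + 1}"
proof
  assume "x \<in> {- real N..<- real N + 1}"
  then have "\<lceil>- x\<rceil> = int N" by (intro ceiling_unique) auto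
  then show "block_index x = N" using assms by (simp add: block_index_def)
next
  assume "block_index x = N"
  then have "real N = real_of_int \<lceil>- x\<rceil>" using assms by (simp add: block_index_def)
  then show "x \<in> {- real N..<- real N + 1}" by simp linarith
qed

lemma g_omega_ext_eq_block:
  "g_omega_ext g (\<eta>, u) x = g_omega g (shifted_point (block_index x)) (x + real (block_index x))"
proof (cases "0 \<le> x")
  case False
  then have "\<lceil>- x\<rceil> > 0" "real (nat \<lceil>- x\<rceil>) = real_of_int \<lceil>- x\<rceil>" by simp_all
  then show ?thesis using False
    by (simp add: g_omega_ext_def block_index_def shifted_point_def Let_def add.commute)
qed (simp add: g_omega_ext_def block_index_def shifted_point_def)

end

section \<open>Convolution and the weak* limit along \<open>\<omega>\<close>\<close>

locale Uop_omega = Omega_point +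
  fixes \<phi> f :: "real \<Rightarrow> complex" and C :: real
  assumes L1_phi: "L1_Rplus \<phi>" and Linf_f: "Linf_Rplus f"
    and nonneg_C: "0 \<le> C" and bounded_f: "AE t in lborel. norm (indicator {0..} t *\<^sub>R f t) \<le> C"
begin

definition f_plus :: "real \<Rightarrow> complex" where
  "f_plus t = indicator {0..} t *\<^sub>R f t"

definition f_omega :: "nat \<Rightarrow> real \<Rightarrow> complex" where
  "f_omega N t = indicator {0..} t *\<^sub>R g_omega f (shifted_point N) t"

definition f_ext :: "real \<Rightarrow> complex" where
  "f_ext = g_omega_ext f (\<eta>, u)"

definition block :: "nat \<Rightarrow> real set" where
  "block N = (if N = 0 then {0..} else {- real N..<- real N + 1})"

lemma borel_measurable_f_plus [measurable]: "f_plus \<in> borel_measurable borel"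
  unfolding f_plus_def[abs_def] by (rule borel_measurable_Linf_Rplus[OF Linf_f])

lemma f_plus_translate_bound: "AE t in lborel. norm (f_plus (t + c)) \<le> C"
  using AE_lborel_translate[OF bounded_f[folded f_plus_def]] .

lemma integrable_f_plus_mult: "integrable lborel \<Phi> \<Longrightarrow> integrable lborel (\<lambda>z. f_plus (z + c) * \<Phi> z)"
  by (rule integrable_bounded_mult[OF _ _ f_plus_translate_bound]) measurable

lemma weakstar_shift_lim_f: "weakstar_shift_lim (point_filter N) f (g_omega f (shifted_point N))"
  by (rule weakstar_shift_lim_g_omega[OF Linf_f])

lemma borel_measurable_f_omega [measurable]: "f_omega N \<in> borel_measurable borel"
  unfolding f_omega_def[abs_def]
  by (rule borel_measurable_Linf_Rplus) (use weakstar_shift_lim_f in \<open>simp add: weakstar_shift_lim_def\<close>)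

lemma f_omega_bound: "AE t in lborel. norm (f_omega N t) \<le> C"
proof -
  interpret shift_limit f "point_filter N" C
    using ultrafilter_point_filter eventually_nonneg_point_filter borel_measurable_Linf_Rplus[OF Linf_f]
      bounded_f nonneg_C by unfold_locales
  show ?thesis unfolding f_omega_def by (rule weakstar_shift_lim_bound[OF weakstar_shift_lim_f])
qed

lemma f_ext_eq_block: "f_ext x = f_omega (block_index x) (x + real (block_index x))"
  using block_index_nonneg[of x] by (simp add: f_ext_def g_omega_ext_eq_block f_omega_def)

lemma f_ext_block:
  assumes "x \<in> block N" shows "f_ext x = f_omega N (x + real N)"
proof (cases "N = 0")
  case False
  then have "block_index x = N" using assms block_index_eq_iff[of x N] by (auto simp: block_def)
  then show ?thesis by (simp add: f_ext_eq_block)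
qed (use assms in \<open>simp add: f_ext_eq_block block_def block_index_def\<close>)

lemma borel_measurable_f_ext [measurable]: "f_ext \<in> borel_measurable borel"
proof (rule borel_measurable_LIMSEQ_metric)
  define approx where "approx K x = (\<Sum>N\<le>K. indicator (block N) x *\<^sub>R f_omega N (x + real N))" for K x
  show "approx K \<in> borel_measurable borel" for K
    unfolding approx_def[abs_def] block_def by measurable
  show "(\<lambda>K. approx K x) \<longlonglongrightarrow> f_ext x" if "x \<in> space borel" for x
  proof (rule tendsto_eventually, unfold eventually_sequentially, intro exI allI impI)
    fix K assume K: "block_index x \<le> K"
    have "x \<in> block N \<longleftrightarrow> N = block_index x" for N
      using block_index_eq_iff[of x N] by (cases "N = 0") (auto simp: block_def block_index_def)
    then have "approx K x = (\<Sum>N\<le>K. if N = block_index x then f_omega N (x + real N) else 0)"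
      unfolding approx_def by (intro sum.cong) (auto simp: indicator_def)
    then show "approx K x = f_ext x" using K by (simp add: f_ext_eq_block)
  qed
qed

lemma f_ext_bound: "AE x in lborel. norm (f_ext x) \<le> C"
proof -
  have "AE x in lborel. \<forall>N. norm (f_omega N (x + real N)) \<le> C"
    using AE_lborel_translate[OF f_omega_bound] by (simp add: AE_all_countable)
  then show ?thesis by eventually_elim (simp add: f_ext_eq_block)
qed

lemma integrable_f_ext_mult: "integrable lborel \<Phi> \<Longrightarrow> integrable lborel (\<lambda>z. f_ext z * \<Phi> z)"
  by (rule integrable_bounded_mult[OF _ _ f_ext_bound]) measurable

text \<open>On the block \<open>[-N, -N + 1)\<close>, the translates of f along \<open>\<eta>\<close> are the translates
  along the filter of \<open>\<tau>\<^sup>-\<^sup>N \<omega>\<close>, shifted back by N.\<close>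

lemma tendsto_block_integral:
  assumes \<Phi>i: "integrable lborel \<Phi>"
  shows "((\<lambda>n. \<integral>z. indicator (block N) z *\<^sub>R (f_plus (z + lattice_point n) * \<Phi> z) \<partial>lborel)
          \<longlongrightarrow> (\<integral>z. indicator (block N) z *\<^sub>R (f_ext z * \<Phi> z) \<partial>lborel)) \<eta>"
proof -
  define \<psi> where "\<psi> v = indicator (block N) (v - real N) *\<^sub>R \<Phi> (v - real N)" for v
  have "integrable lborel (\<lambda>z. indicator (block N) z *\<^sub>R \<Phi> z)"
    by (intro integrable_mult_indicator \<Phi>i) (simp add: block_def)
  from integrable_lborel_translate[OF this, of "- real N"] have "integrable lborel \<psi>"
    unfolding \<psi>_def[abs_def] by simp
  then have "L1_Rplus \<psi>"
    unfolding L1_Rplus_iff_integrable by (rule integrable_mult_indicator[rotated]) simp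
  then have "((\<lambda>s. LINT t:{0..}|lborel. f (t + s) * \<psi> t)
      \<longlongrightarrow> (LINT t:{0..}|lborel. g_omega f (shifted_point N) t * \<psi> t)) (point_filter N)"
    using weakstar_shift_lim_f unfolding weakstar_shift_lim_def by blast
  then have lim: "((\<lambda>n. LINT t:{0..}|lborel. f (t + (lattice_point n - real N)) * \<psi> t)
      \<longlongrightarrow> (LINT t:{0..}|lborel. g_omega f (shifted_point N) t * \<psi> t)) \<eta>"
    unfolding tendsto_point_filter_iff .
  have block_shift: "v - real N \<in> block N \<Longrightarrow> 0 \<le> v" for v
    by (auto simp: block_def split: if_splits)
  have pairing_eq: "(\<integral>z. indicator (block N) z *\<^sub>R (f_plus (z + lattice_point n) * \<Phi> z) \<partial>lborel)
      = (LINT t:{0..}|lborel. f (t + (lattice_point n - real N)) * \<psi> t)" if n: "N \<le> n" for n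
  proof -
    have "real N \<le> lattice_point n" using n u by (simp add: lattice_point_def)
    then show ?thesis
      unfolding set_lebesgue_integral_def
      by (subst lborel_integral_translate[of _ "- real N"], intro Bochner_Integration.integral_cong)
         (auto simp: f_plus_def \<psi>_def indicator_def algebra_simps dest: block_shift)
  qed
  note eventually_ge_eta[of N]
  then have "eventually (\<lambda>n. (LINT t:{0..}|lborel. f (t + (lattice_point n - real N)) * \<psi> t)
      = (\<integral>z. indicator (block N) z *\<^sub>R (f_plus (z + lattice_point n) * \<Phi> z) \<partial>lborel)) \<eta>"
    by eventually_elim (simp add: pairing_eq)
  moreover have "(\<integral>z. indicator (block N) z *\<^sub>R (f_ext z * \<Phi> z) \<partial>lborel)
      = (LINT t:{0..}|lborel. g_omega f (shifted_point N) t * \<psi> t)"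
    unfolding set_lebesgue_integral_def
    by (subst lborel_integral_translate[of _ "- real N"], intro Bochner_Integration.integral_cong)
       (auto simp: f_ext_block f_omega_def \<psi>_def indicator_def dest: block_shift)
  ultimately show ?thesis using lim by (simp add: tendsto_cong)
qed

lemma tendsto_head_integral:
  assumes \<Phi>i: "integrable lborel \<Phi>"
  shows "((\<lambda>n. \<integral>z. indicator {- real K..} z *\<^sub>R (f_plus (z + lattice_point n) * \<Phi> z) \<partial>lborel)
          \<longlongrightarrow> (\<integral>z. indicator {- real K..} z *\<^sub>R (f_ext z * \<Phi> z) \<partial>lborel)) \<eta>"
proof (induction K)
  case 0
  then show ?case using tendsto_block_integral[OF \<Phi>i, of 0] by (simp add: block_def)
next
  case (Suc K)
  have ind_Suc: "indicator {- real (Suc K)..} z *\<^sub>R (X::complex)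
      = indicator {- real K..} z *\<^sub>R X + indicator (block (Suc K)) z *\<^sub>R X" for z X
    by (auto simp: block_def indicator_def)
  have "integrable lborel (\<lambda>z. indicator A z *\<^sub>R (f_plus (z + lattice_point n) * \<Phi> z))"
    "integrable lborel (\<lambda>z. indicator A z *\<^sub>R (f_ext z * \<Phi> z))" if "A \<in> sets borel" for A n
    using that by (intro integrable_mult_indicator integrable_f_plus_mult integrable_f_ext_mult \<Phi>i; simp)+
  then show ?case
    unfolding ind_Suc using Suc tendsto_block_integral[OF \<Phi>i, of "Suc K"]
    by (subst (1 2) Bochner_Integration.integral_add) (auto simp: block_def intro: tendsto_add)
qed

lemma tendsto_f_plus_pairing:
  assumes \<Phi>i: "integrable lborel \<Phi>"
  shows "((\<lambda>n. \<integral>z. f_plus (z + lattice_point n) * \<Phi> z \<partial>lborel) \<longlongrightarrow> (\<integral>z. f_ext z * \<Phi> z \<partial>lborel)) \<eta>"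
proof -
  define tail where "tail K = C * (\<integral>z. norm (indicator {..< - real K} z *\<^sub>R \<Phi> z) \<partial>lborel)" for K
  have "eventually (\<lambda>n. norm ((\<integral>z. f_plus (z + lattice_point n) * \<Phi> z \<partial>lborel)
      - (\<integral>z. indicator {- real K..} z *\<^sub>R (f_plus (z + lattice_point n) * \<Phi> z) \<partial>lborel)) \<le> tail K) \<eta>"
    for K
    unfolding tail_def
    by (intro always_eventually allI norm_integral_left_tail_le[OF \<Phi>i _ f_plus_translate_bound nonneg_C])
       simp
  moreover have "norm ((\<integral>z. f_ext z * \<Phi> z \<partial>lborel)
      - (\<integral>z. indicator {- real K..} z *\<^sub>R (f_ext z * \<Phi> z) \<partial>lborel)) \<le> tail K" for K
    unfolding tail_def by (rule norm_integral_left_tail_le[OF \<Phi>i _ f_ext_bound nonneg_C]) simp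
  moreover have "tail \<longlonglongrightarrow> 0"
    unfolding tail_def using tendsto_mult[OF tendsto_const tendsto_integral_left_tail[OF \<Phi>i]] by simp
  ultimately show ?thesis by (rule tendsto_of_approximations[OF tendsto_head_integral[OF \<Phi>i]])
qed

lemma integrable_phi_tilde: "integrable lborel (phi_tilde \<phi>)"
proof -
  have "phi_tilde \<phi> = (\<lambda>t. indicator {0..} t *\<^sub>R \<phi> t)"
    by (auto simp: phi_tilde_def fun_eq_iff indicator_def)
  then show ?thesis using L1_phi unfolding L1_Rplus_iff_integrable by simp
qed

lemma borel_measurable_phi_tilde [measurable]: "phi_tilde \<phi> \<in> borel_measurable borel"
  using borel_measurable_integrable[OF integrable_phi_tilde] by simp

lemma Uop_translate_eq: "Uop \<phi> f (y + s) = (\<integral>z. f_plus (z + s) * phi_tilde \<phi> (y - z) \<partial>lborel)"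
proof -
  have "Uop \<phi> f x = (\<integral>t. f_plus t * phi_tilde \<phi> (x - t) \<partial>lborel)" for x
    unfolding Uop_def set_lebesgue_integral_def
    by (intro Bochner_Integration.integral_cong) (auto simp: f_plus_def phi_tilde_def indicator_def)
  then show ?thesis
    using lborel_integral_translate[of "\<lambda>t. f_plus t * phi_tilde \<phi> (y + s - t)" s] by simp
qed

definition conv_shift :: "nat \<Rightarrow> real \<Rightarrow> complex" where
  "conv_shift N y = conv f_ext (phi_tilde \<phi>) (y - real N)"

lemma Linf_Rplus_conv_shift: "Linf_Rplus (conv_shift N)"
proof (rule Linf_RplusI)
  have "(\<lambda>y. \<integral>t. f_ext (y - real N - t) * phi_tilde \<phi> t \<partial>lborel) \<in> borel_measurable borel"
    by measurable
  then show "conv_shift N \<in> borel_measurable borel" unfolding conv_shift_def[abs_def] conv_def .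
  fix y
  have "AE t in lborel. norm (f_ext ((y - real N) + (-1) * t)) \<le> C"
    by (rule AE_lborel_affine[OF _ f_ext_bound]) simp
  then show "norm (conv_shift N y) \<le> C * (\<integral>t. norm (phi_tilde \<phi> t) \<partial>lborel)"
    unfolding conv_shift_def conv_def
    by (intro norm_integral_bounded_mult[OF integrable_phi_tilde _ _ nonneg_C]) simp_all
qed

definition phi_correlation :: "(real \<Rightarrow> complex) \<Rightarrow> real \<Rightarrow> complex" where
  "phi_correlation \<psi> z = (\<integral>y. (indicator {0..} y *\<^sub>R \<psi> y) * phi_tilde \<phi> (y - z) \<partial>lborel)"

lemma integrable_phi_correlation:
  "L1_Rplus \<psi> \<Longrightarrow> integrable lborel (phi_correlation \<psi>)"
  unfolding phi_correlation_def[abs_def] L1_Rplus_iff_integrable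
  by (rule integrable_correlation[OF _ integrable_phi_tilde])

lemma Uop_pairing_eq:
  assumes "L1_Rplus \<psi>"
  shows "(LINT y:{0..}|lborel. Uop \<phi> f (y + s) * \<psi> y) = (\<integral>z. f_plus (z + s) * phi_correlation \<psi> z \<partial>lborel)"
proof -
  have "(LINT y:{0..}|lborel. Uop \<phi> f (y + s) * \<psi> y)
      = (\<integral>y. (indicator {0..} y *\<^sub>R \<psi> y) * (\<integral>z. f_plus (z + s) * phi_tilde \<phi> (y - z) \<partial>lborel) \<partial>lborel)"
    unfolding set_lebesgue_integral_def Uop_translate_eq by (simp add: mult.commute)
  also have "\<dots> = (\<integral>z. f_plus (z + s) * phi_correlation \<psi> z \<partial>lborel)"
    unfolding phi_correlation_def using assms unfolding L1_Rplus_iff_integrable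
    by (rule integral_convolution_swap[OF _ integrable_phi_tilde _ f_plus_translate_bound nonneg_C]) simp
  finally show ?thesis .
qed

lemma conv_shift_pairing_eq:
  assumes "L1_Rplus \<psi>"
  shows "(\<integral>z. f_ext z * phi_correlation \<psi> (z + real N) \<partial>lborel) = (LINT y:{0..}|lborel. conv_shift N y * \<psi> y)"
proof -
  have "(\<integral>z. f_ext z * phi_correlation \<psi> (z + real N) \<partial>lborel)
      = (\<integral>z. f_ext (z + - real N) * phi_correlation \<psi> z \<partial>lborel)"
    by (subst lborel_integral_translate[of _ "- real N"]) simp
  also have "\<dots> = (\<integral>y. (indicator {0..} y *\<^sub>R \<psi> y)
      * (\<integral>z. f_ext (z + - real N) * phi_tilde \<phi> (y - z) \<partial>lborel) \<partial>lborel)"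
    unfolding phi_correlation_def using assms unfolding L1_Rplus_iff_integrable
    by (rule integral_convolution_swap[OF _ integrable_phi_tilde _ AE_lborel_translate[OF f_ext_bound]
          nonneg_C, symmetric]) simp
  also have "\<dots> = (LINT y:{0..}|lborel. conv_shift N y * \<psi> y)"
    unfolding set_lebesgue_integral_def
  proof (intro Bochner_Integration.integral_cong refl)
    fix y
    have "(\<integral>z. f_ext (z + - real N) * phi_tilde \<phi> (y - z) \<partial>lborel) = conv_shift N y"
      using lborel_integral_reflect[of "\<lambda>z. f_ext (z + - real N) * phi_tilde \<phi> (y - z)" y]
      by (simp add: conv_shift_def conv_def algebra_simps)
    then show "(indicator {0..} y *\<^sub>R \<psi> y) * (\<integral>z. f_ext (z + - real N) * phi_tilde \<phi> (y - z) \<partial>lborel)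
        = indicator {0..} y *\<^sub>R (conv_shift N y * \<psi> y)"
      by (simp add: mult.commute)
  qed
  finally show ?thesis .
qed

lemma weakstar_shift_lim_Uop: "weakstar_shift_lim (point_filter N) (Uop \<phi> f) (conv_shift N)"
  unfolding weakstar_shift_lim_def
proof (intro conjI allI impI Linf_Rplus_conv_shift)
  fix \<psi> assume \<psi>: "L1_Rplus \<psi>"
  have "(\<integral>z. f_plus (z + (lattice_point n - real N)) * phi_correlation \<psi> z \<partial>lborel)
      = (\<integral>z. f_plus (z + lattice_point n) * phi_correlation \<psi> (z + real N) \<partial>lborel)" for n
    by (subst lborel_integral_translate[of _ "real N"]) (simp add: algebra_simps)
  moreover have "((\<lambda>n. \<integral>z. f_plus (z + lattice_point n) * phi_correlation \<psi> (z + real N) \<partial>lborel)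
      \<longlongrightarrow> (\<integral>z. f_ext z * phi_correlation \<psi> (z + real N) \<partial>lborel)) \<eta>"
    by (rule tendsto_f_plus_pairing[OF integrable_lborel_translate[OF integrable_phi_correlation[OF \<psi>]]])
  ultimately show "((\<lambda>s. LINT t:{0..}|lborel. Uop \<phi> f (t + s) * \<psi> t)
      \<longlongrightarrow> (LINT t:{0..}|lborel. conv_shift N t * \<psi> t)) (point_filter N)"
    unfolding tendsto_point_filter_iff Uop_pairing_eq[OF \<psi>] conv_shift_pairing_eq[OF \<psi>, symmetric]
    by simp
qed

end

theorem theorem3p1:
  fixes \<phi> f :: "real \<Rightarrow> complex" and \<eta> :: "nat filter" and u :: real
  assumes "L1_Rplus \<phi>"
    and "Linf_Rplus f"
    and "free_ultrafilter_nat \<eta>" and "u \<in> {0..1}"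
  shows "AE x in lborel.
           g_omega_ext (Uop \<phi> f) (\<eta>, u) x = conv (g_omega_ext f (\<eta>, u)) (phi_tilde \<phi>) x"
proof -
  obtain C where "0 \<le> C" "AE t in lborel. norm (indicator {0..} t *\<^sub>R f t) \<le> C"
    using Linf_Rplus_bound[OF assms(2)] by blast
  then interpret Uop_omega \<eta> u \<phi> f C
    using assms by unfold_locales auto
  have "\<forall>N. AE x in lborel. x + real N \<in> {0..} \<longrightarrow>
      g_omega (Uop \<phi> f) (shifted_point N) (x + real N) = conv_shift N (x + real N)"
    using AE_lborel_translate[OF g_omega_AE_eq[OF weakstar_shift_lim_Uop]] by blast
  then have "AE x in lborel. \<forall>N. x + real N \<in> {0..} \<longrightarrow>
      g_omega (Uop \<phi> f) (shifted_point N) (x + real N) = conv_shift N (x + real N)"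
    by (simp add: AE_all_countable)
  then show ?thesis
  proof eventually_elim
    case (elim x)
    then have "g_omega_ext (Uop \<phi> f) (\<eta>, u) x = conv_shift (block_index x) (x + real (block_index x))"
      using block_index_nonneg[of x] by (simp add: g_omega_ext_eq_block)
    then show ?case by (simp add: conv_shift_def f_ext_def)
  qed
qed

end
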